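(* Let $X$, $\mathcal{B}$, $\Delta$, $\mathcal{D}(\mathcal{B})$ and $\mu\mapsto\hat\mu$ be as in the context (in particular $\mathcal{B}$ vanishes nowhere on $X$). For every $\mu\in\mathcal{D}(\mathcal{B})$, the image $\hat{\mathcal{B}}=\{\hat f: f\in\mathcal{B}\}$ is dense in $L_2(\Delta,\hat\mu,\mathbb{R})$.
   Context: $X$ is a nonempty set and $\mathcal{B}$ is a real vector space of bounded functions $X\to\mathbb{R}$ closed under pointwise multiplication, pointwise max and min, with $f\wedge1\in\mathcal{B}$ for $f\in\mathcal{B}$. Assume that for every $x\in X$ there is $f\in\mathcal{B}$ with $f(x)\neq0$. $A(\mathcal{B})$ is the supremum-norm closure of $\mathcal{B}+i\mathcal{B}$, a commutative $C^\ast$-algebra; $\Delta$ is its spectrum (nonzero continuous multiplicative linear functionals with the Gelfand topology), locally compact Hausdorff; $\hat a(\varphi)=\varphi(a)$ is the Gelfand transform, an isometric $^\ast$-isomorphism $A(\mathcal{B})\to C_0(\Delta)$; $\hat f\geq0$ iff $f$ is real-valued and $\geq0$. $\sigma(\mathcal{B})$ is the $\sigma$-ring generated by $\mathcal{B}$, and $\mathcal{D}(\mathcal{B})$ is the set of nonnegative measures $\mu$ on $\sigma(\mathcal{B})$ such that every $f\in\mathcal{B}$ is $\mu$-integrable. For $\mu\in\mathcal{D}(\mathcal{B})$: set $I(f)=\int_Xf\,d\mu$ for $f\in\mathcal{B}$; for nonnegative real-valued $f\in A(\mathcal{B})$ set $I(f)=\sup_nI(f_n)$ for any increasing sequence $(f_n)$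 of nonnegative functions in $\mathcal{B}$ converging pointwise to $f$; set $\hat I(\hat f):=I(f)$ for nonnegative $\hat f\in C_0(\Delta)$; $\hat\mu$ is the unique nonnegative Radon measure on $\Delta$ with $\int_\Delta\hat g\,d\hat\mu=\hat I(\hat g)$ for all nonnegative $\hat g\in C_c(\Delta)$. *)

theory Defs
  imports "HOL-Analysis.Analysis"
begin

definition admissible_space :: "('x \<Rightarrow> real) set \<Rightarrow> bool" where
  "admissible_space B \<longleftrightarrow>
     (\<lambda>x. 0) \<in> B \<and>
     (\<forall>f\<in>B. \<forall>g\<in>B. (\<lambda>x. f x + g x) \<in> B) \<and>
     (\<forall>f\<in>B. \<forall>c::real. (\<lambda>x. c * f x) \<in> B) \<and>
     (\<forall>f\<in>B. \<exists>C. \<forall>x. \<bar>f x\<bar> \<le> C) \<and>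
     (\<forall>f\<in>B. \<forall>g\<in>B. (\<lambda>x. f x * g x) \<in> B) \<and>
     (\<forall>f\<in>B. \<forall>g\<in>B. (\<lambda>x. max (f x) (g x)) \<in> B) \<and>
     (\<forall>f\<in>B. \<forall>g\<in>B. (\<lambda>x. min (f x) (g x)) \<in> B) \<and>
     (\<forall>f\<in>B. (\<lambda>x. min (f x) 1) \<in> B) \<and>
     (\<forall>x. \<exists>f\<in>B. f x \<noteq> 0)"

text \<open>The sigma-ring generated by B: the smallest sigma-ring (closed under differences and
  countable unions, containing the empty set) for which every f in B is measurable in the
  sense of sigma-rings, i.e. contains all sets f^{-1}(E), E Borel with 0 not in E.\<close>
definition sigma_ring_of :: "('x \<Rightarrow> real) set \<Rightarrow> 'x set set" where
  "sigma_ring_of B = \<Inter> {R. {} \<in> R \<and>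
       (\<forall>a\<in>R. \<forall>b\<in>R. a - b \<in> R) \<and>
       (\<forall>A::nat \<Rightarrow> 'x set. range A \<subseteq> R \<longrightarrow> (\<Union>i. A i) \<in> R) \<and>
       (\<forall>f\<in>B. \<forall>E\<in>sets borel. (0::real) \<notin> E \<longrightarrow> {x. f x \<in> E} \<in> R)}"

text \<open>Auxiliary: a measure mu on a sigma-ring R over 'x is turned into an Isabelle measure on
  the generated sigma-algebra by giving complements of ring sets measure infinity; this is
  only used to express integrability and integrals of functions in B w.r.t. mu.\<close>
definition ext_measure :: "'x set set \<Rightarrow> ('x set \<Rightarrow> ennreal) \<Rightarrow> 'x measure" where
  "ext_measure R mu = measure_of UNIV (sigma_sets UNIV R) (\<lambda>A. if A \<in> R then mu A else \<infinity>)"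

definition in_D :: "('x \<Rightarrow> real) set \<Rightarrow> ('x set \<Rightarrow> ennreal) \<Rightarrow> bool" where
  "in_D B mu \<longleftrightarrow> positive (sigma_ring_of B) mu \<and> countably_additive (sigma_ring_of B) mu \<and>
     (\<forall>f\<in>B. integrable (ext_measure (sigma_ring_of B) mu) f)"

definition integral_mu :: "('x \<Rightarrow> real) set \<Rightarrow> ('x set \<Rightarrow> ennreal) \<Rightarrow> ('x \<Rightarrow> real) \<Rightarrow> real" where
  "integral_mu B mu f = integral\<^sup>L (ext_measure (sigma_ring_of B) mu) f"

definition cfun :: "('x \<Rightarrow> real) \<Rightarrow> ('x \<Rightarrow> complex)" where
  "cfun f = (\<lambda>x. complex_of_real (f x))"

definition supnorm :: "('x \<Rightarrow> complex) \<Rightarrow> real" where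
  "supnorm a = (SUP x. cmod (a x))"

definition algA :: "('x \<Rightarrow> real) set \<Rightarrow> ('x \<Rightarrow> complex) set" where
  "algA B = {a. \<forall>e>0. \<exists>f\<in>B. \<exists>g\<in>B. \<forall>x. cmod (a x - (complex_of_real (f x) + \<i> * complex_of_real (g x))) \<le> e}"

definition spectrum_of :: "('x \<Rightarrow> real) set \<Rightarrow> (('x \<Rightarrow> complex) \<Rightarrow> complex) set" where
  "spectrum_of B = {\<phi>. \<phi> \<in> extensional (algA B) \<and>
      (\<forall>a\<in>algA B. \<forall>b\<in>algA B. \<phi> (\<lambda>x. a x + b x) = \<phi> a + \<phi> b) \<and>
      (\<forall>a\<in>algA B. \<forall>c. \<phi> (\<lambda>x. c * a x) = c * \<phi> a) \<and>
      (\<forall>a\<in>algA B. \<forall>b\<in>algA B. \<phi> (\<lambda>x. a x * b x) = \<phi> a * \<phi> b) \<and>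
      (\<exists>C. \<forall>a\<in>algA B. cmod (\<phi> a) \<le> C * supnorm a) \<and>
      (\<exists>a\<in>algA B. \<phi> a \<noteq> 0)}"

text \<open>Gelfand (weak-star) topology = topology of pointwise convergence on A(B).\<close>
definition gelfand_top :: "('x \<Rightarrow> real) set \<Rightarrow> (('x \<Rightarrow> complex) \<Rightarrow> complex) topology" where
  "gelfand_top B = subtopology (product_topology (\<lambda>_. euclidean) (algA B)) (spectrum_of B)"

definition borel_of :: "'a topology \<Rightarrow> 'a measure" where
  "borel_of T = sigma (topspace T) {U. openin T U}"

definition radon_on :: "'a topology \<Rightarrow> 'a measure \<Rightarrow> bool" where
  "radon_on T \<nu> \<longleftrightarrow> sets \<nu> = sets (borel_of T) \<and> space \<nu> = topspace T \<and>
     (\<forall>K. compactin T K \<longrightarrow> emeasure \<nu> K < \<infinity>) \<and>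
     (\<forall>E\<in>sets \<nu>. emeasure \<nu> E = (INF U\<in>{U. openin T U \<and> E \<subseteq> U}. emeasure \<nu> U)) \<and>
     (\<forall>U. openin T U \<longrightarrow> emeasure \<nu> U = (SUP K\<in>{K. compactin T K \<and> K \<subseteq> U}. emeasure \<nu> K))"

definition is_hat_measure :: "('x \<Rightarrow> real) set \<Rightarrow> ('x set \<Rightarrow> ennreal) \<Rightarrow> (('x \<Rightarrow> complex) \<Rightarrow> complex) measure \<Rightarrow> bool" where
  "is_hat_measure B mu \<nu> \<longleftrightarrow> radon_on (gelfand_top B) \<nu> \<and>
     (\<forall>g\<in>algA B. (\<forall>x. Im (g x) = 0 \<and> Re (g x) \<ge> 0) \<longrightarrow>
        compactin (gelfand_top B) ((gelfand_top B) closure_of {\<phi>\<in>spectrum_of B. \<phi> g \<noteq> 0}) \<longrightarrow>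
        (\<forall>F::nat \<Rightarrow> 'x \<Rightarrow> real. (\<forall>n. F n \<in> B \<and> (\<forall>x. F n x \<ge> 0)) \<longrightarrow>
           (\<forall>n x. F n x \<le> F (Suc n) x) \<longrightarrow> (\<forall>x. (\<lambda>n. F n x) \<longlonglongrightarrow> Re (g x)) \<longrightarrow>
           (\<integral>\<^sup>+ \<phi>. ennreal (Re (\<phi> g)) \<partial>\<nu>) = (SUP n. ennreal (integral_mu B mu (F n)))))"

end

(*
  Every character of A(B) is real and monotone on B, so f \<mapsto> hat f is a lattice homomorphism
  into the continuous functions on the spectrum; neighbourhoods in the Gelfand topology are cut
  out by finitely many hat f.  Lattice operations in B then yield Urysohn functions hat h
  (h \<in> B) for every compact set inside an open set.  By Tychonoff the sets
  {hat w \<ge> t}, t > 0, are compact, so truncations of functions of B have compactly supported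
  transforms and the defining property of mu-hat bounds the integral of hat w by that of w;
  in particular every hat f is square integrable.  Regularity of mu-hat and Urysohn functions
  approximate indicators of sets of finite measure in L2, and the usual passage through simple
  functions and monotone limits gives density of hat B in L2.
*)

theory Submission
  imports Defs
begin

lemma le_of_pow_mult_le:
  fixes r M c d :: real
  assumes "0 \<le> M" "0 < c" "\<And>n. r ^ n * c \<le> d * M ^ n"
  shows "r \<le> M"
proof (rule ccontr)
  assume "\<not> r \<le> M"
  then have "M < r" by simp
  show False
  proof (cases "M = 0")
    case True
    then have "0 < r * c" using \<open>M < r\<close> assms(2) by simp
    then show ?thesis using assms(3)[of 1] True by simp
  next
    case False
    then have "1 < r / M" using \<open>M < r\<close> assms(1) by simp
    then obtain n where "d / c < (r / M) ^ n" using real_arch_pow by blast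
    moreover have "(r / M) ^ n * c \<le> d" using assms(3)[of n] False assms(1)
      by (simp add: power_divide field_simps)
    ultimately show False using assms(2) by (simp add: field_simps)
  qed
qed

lemma bump_estimate:
  fixes K R \<eta> d \<sigma> z r :: real
  assumes "1 \<le> K" "(2 + R) / \<eta> < K" "0 < \<eta>" "0 \<le> d"
    and pos: "0 < \<sigma> - K * \<bar>\<sigma> - \<sigma> * \<sigma>\<bar> - K * d"
    and "\<bar>z - r * \<sigma>\<bar> \<le> d" "\<bar>r\<bar> \<le> R"
  shows "\<bar>z - r\<bar> < \<eta>"
proof -
  have Kd: "K * d < \<sigma>" and Ks: "K * \<bar>\<sigma> - \<sigma> * \<sigma>\<bar> < \<sigma>"
    using pos assms(1,4) by (smt (verit) mult_nonneg_nonneg abs_ge_zero)+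
  then have "0 < \<sigma>" using assms(1,4) by (smt (verit) mult_nonneg_nonneg)
  moreover have "\<bar>\<sigma> - \<sigma> * \<sigma>\<bar> = \<sigma> * \<bar>1 - \<sigma>\<bar>"
  proof -
    have "\<sigma> - \<sigma> * \<sigma> = \<sigma> * (1 - \<sigma>)" by (simp add: algebra_simps)
    then show ?thesis using \<open>0 < \<sigma>\<close> by (simp add: abs_mult)
  qed
  ultimately have K1: "K * \<bar>1 - \<sigma>\<bar> < 1" using Ks by (simp add: mult.left_commute)
  then have "\<sigma> < 2" using assms(1) by (smt (verit) mult_le_cancel_right1 abs_ge_zero)
  have "\<bar>z - r\<bar> \<le> \<bar>z - r * \<sigma>\<bar> + \<bar>r\<bar> * \<bar>1 - \<sigma>\<bar>"
  proof -
    have "z - r = (z - r * \<sigma>) + r * (\<sigma> - 1)" by (simp add: algebra_simps)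
    then show ?thesis by (metis abs_minus_commute abs_mult abs_triangle_ineq)
  qed
  also have "\<dots> \<le> d + R * \<bar>1 - \<sigma>\<bar>" using assms(6,7) by (intro add_mono mult_right_mono) auto
  finally have "K * \<bar>z - r\<bar> \<le> K * d + R * (K * \<bar>1 - \<sigma>\<bar>)"
    using assms(1) by (smt (verit) mult_left_mono distrib_left mult.left_commute)
  also have "\<dots> < 2 + R" using Kd \<open>\<sigma> < 2\<close> K1 assms(7) by (smt (verit) mult_left_le abs_ge_zero mult_nonneg_nonneg)
  also have "\<dots> < K * \<eta>" using assms(2,3) by (simp add: divide_less_eq mult.commute)
  finally show ?thesis using assms(1) by simp
qed

lemma closedin_continuous_maps_all_eq:
  assumes "Hausdorff_space Y" "\<And>i. i \<in> I \<Longrightarrow> continuous_map X Y (f i)" "\<And>i. i \<in> I \<Longrightarrow> continuous_map X Y (g i)"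
  shows "closedin X {x \<in> topspace X. \<forall>i\<in>I. f i x = g i x}"
proof (cases "I = {}")
  case False
  then have "closedin X (\<Inter>i\<in>I. {x \<in> topspace X. f i x = g i x})"
    using assms closedin_continuous_maps_eq by (intro closedin_INT) blast+
  moreover have "(\<Inter>i\<in>I. {x \<in> topspace X. f i x = g i x}) = {x \<in> topspace X. \<forall>i\<in>I. f i x = g i x}"
    using False by auto
  ultimately show ?thesis by simp
qed simp

lemma closedin_continuous_maps_all_preimage:
  assumes "\<And>i. i \<in> I \<Longrightarrow> continuous_map X Y (f i)" "\<And>i. i \<in> I \<Longrightarrow> closedin Y (C i)"
  shows "closedin X {x \<in> topspace X. \<forall>i\<in>I. f i x \<in> C i}"
proof (cases "I = {}")
  case False
  then have "closedin X (\<Inter>i\<in>I. {x \<in> topspace X. f i x \<in> C i})"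
    using assms closedin_continuous_map_preimage by (intro closedin_INT) blast+
  moreover have "(\<Inter>i\<in>I. {x \<in> topspace X. f i x \<in> C i}) = {x \<in> topspace X. \<forall>i\<in>I. f i x \<in> C i}"
    using False by auto
  ultimately show ?thesis by simp
qed simp

lemma continuous_map_mult:
  fixes f g :: "'a \<Rightarrow> 'b::real_normed_algebra"
  shows "continuous_map X euclidean f \<Longrightarrow> continuous_map X euclidean g \<Longrightarrow> continuous_map X euclidean (\<lambda>x. f x * g x)"
  by (simp add: continuous_map_atin tendsto_mult)

lemma nn_integral_square_add_less:
  fixes a b :: "'a \<Rightarrow> real"
  assumes [measurable]: "a \<in> borel_measurable M" "b \<in> borel_measurable M"
    and "(\<integral>\<^sup>+ x. ennreal ((a x)\<^sup>2) \<partial>M) < ennreal (e / 4)" "(\<integral>\<^sup>+ x. ennreal ((b x)\<^sup>2) \<partial>M) < ennreal (e / 4)"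
  shows "(\<integral>\<^sup>+ x. ennreal ((a x + b x)\<^sup>2) \<partial>M) < ennreal e"
proof -
  have "ennreal ((a x + b x)\<^sup>2) \<le> 2 * ennreal ((a x)\<^sup>2) + 2 * ennreal ((b x)\<^sup>2)" for x
  proof -
    have "(a x + b x)\<^sup>2 \<le> 2 * (a x)\<^sup>2 + 2 * (b x)\<^sup>2"
      using zero_le_power2[of "a x - b x"] by (simp add: power2_eq_square algebra_simps)
    then have "ennreal ((a x + b x)\<^sup>2) \<le> ennreal (2 * (a x)\<^sup>2 + 2 * (b x)\<^sup>2)" by (rule ennreal_leI)
    then show ?thesis by (simp add: ennreal_plus ennreal_mult)
  qed
  then have "(\<integral>\<^sup>+ x. ennreal ((a x + b x)\<^sup>2) \<partial>M) \<le> (\<integral>\<^sup>+ x. 2 * ennreal ((a x)\<^sup>2) + 2 * ennreal ((b x)\<^sup>2) \<partial>M)"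
    by (intro nn_integral_mono)
  also have "\<dots> = 2 * (\<integral>\<^sup>+ x. ennreal ((a x)\<^sup>2) \<partial>M) + 2 * (\<integral>\<^sup>+ x. ennreal ((b x)\<^sup>2) \<partial>M)"
    by (simp add: nn_integral_add nn_integral_cmult)
  also have "\<dots> < 2 * ennreal (e / 4) + 2 * ennreal (e / 4)"
    using assms(3,4) by (intro add_strict_mono ennreal_mult_strict_left_mono) auto
  also have "\<dots> = ennreal e"
  proof -
    have "0 < ennreal (e / 4)" using assms(3) by (rule le_less_trans[OF zero_le])
    then have "0 \<le> e" by simp
    then show ?thesis by (simp flip: ennreal_plus ennreal_numeral ennreal_mult)
  qed
  finally show ?thesis .
qed

section \<open>The algebra A(B) and its characters\<close>

definition cplx :: "('x \<Rightarrow> real) \<Rightarrow> ('x \<Rightarrow> real) \<Rightarrow> 'x \<Rightarrow> complex" where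
  "cplx f g x = complex_of_real (f x) + \<i> * complex_of_real (g x)"

lemma norm_cplx_le: "cmod (cplx f g x) \<le> \<bar>f x\<bar> + \<bar>g x\<bar>"
  using norm_triangle_ineq[of "complex_of_real (f x)" "\<i> * complex_of_real (g x)"]
  by (simp add: cplx_def norm_mult)

lemma algA_iff: "a \<in> algA B \<longleftrightarrow> (\<forall>e>0. \<exists>f\<in>B. \<exists>g\<in>B. \<forall>x. cmod (a x - cplx f g x) \<le> e)"
  by (simp add: algA_def cplx_def)

locale admissible =
  fixes B :: "('x \<Rightarrow> real) set"
  assumes admissible: "admissible_space B"
begin

lemma B_zero: "(\<lambda>x. 0) \<in> B"
  and B_add: "f \<in> B \<Longrightarrow> g \<in> B \<Longrightarrow> (\<lambda>x. f x + g x) \<in> B"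
  and B_scale: "f \<in> B \<Longrightarrow> (\<lambda>x. c * f x) \<in> B"
  and B_bounded: "f \<in> B \<Longrightarrow> \<exists>C. \<forall>x. \<bar>f x\<bar> \<le> C"
  and B_mult: "f \<in> B \<Longrightarrow> g \<in> B \<Longrightarrow> (\<lambda>x. f x * g x) \<in> B"
  and B_max: "f \<in> B \<Longrightarrow> g \<in> B \<Longrightarrow> (\<lambda>x. max (f x) (g x)) \<in> B"
  and B_min_1: "f \<in> B \<Longrightarrow> (\<lambda>x. min (f x) 1) \<in> B"
  using admissible unfolding admissible_space_def by blast+

lemma B_diff: "f \<in> B \<Longrightarrow> g \<in> B \<Longrightarrow> (\<lambda>x. f x - g x) \<in> B"
  using B_add[of f "\<lambda>x. (-1) * g x"] B_scale[of g "-1"] by simp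

lemma B_abs: "f \<in> B \<Longrightarrow> (\<lambda>x. \<bar>f x\<bar>) \<in> B"
proof -
  have "(\<lambda>x. \<bar>f x\<bar>) = (\<lambda>x. max (f x) ((-1) * f x))" by (auto simp: fun_eq_iff)
  then show "f \<in> B \<Longrightarrow> (\<lambda>x. \<bar>f x\<bar>) \<in> B" using B_max B_scale by metis
qed

lemma B_sum: "finite G \<Longrightarrow> (\<And>j. j \<in> G \<Longrightarrow> F j \<in> B) \<Longrightarrow> (\<lambda>x. \<Sum>j\<in>G. F j x) \<in> B"
  by (induction G rule: finite_induct) (auto intro: B_zero B_add[of _ "\<lambda>x. sum (\<lambda>j. F j x) _", simplified])

abbreviation A :: "('x \<Rightarrow> complex) set" where "A \<equiv> algA B"

lemma cplx_in_algA: "f \<in> B \<Longrightarrow> g \<in> B \<Longrightarrow> cplx f g \<in> A"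
  unfolding algA_iff by force

lemma cfun_in_algA: "f \<in> B \<Longrightarrow> cfun f \<in> A"
proof -
  have "cplx f (\<lambda>x. 0) = cfun f" by (simp add: fun_eq_iff cplx_def cfun_def)
  then show "f \<in> B \<Longrightarrow> cfun f \<in> A" using cplx_in_algA[OF _ B_zero] by metis
qed

lemma algA_bounded:
  assumes "a \<in> A" shows "\<exists>M\<ge>0. \<forall>x. cmod (a x) \<le> M"
proof -
  obtain f g where fg: "f \<in> B" "g \<in> B" "\<And>x. cmod (a x - cplx f g x) \<le> 1"
    using assms unfolding algA_iff by (meson zero_less_one)
  obtain C1 C2 where C: "\<And>x. \<bar>f x\<bar> \<le> C1" "\<And>x. \<bar>g x\<bar> \<le> C2" using B_bounded fg by metis
  have "cmod (a x) \<le> 1 + C1 + C2" for x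
    using norm_triangle_sub[of "a x" "cplx f g x"] fg(3)[of x] norm_cplx_le[of f g x] C[of x] by linarith
  moreover have "0 \<le> 1 + C1 + C2" using C[of undefined] by linarith
  ultimately show ?thesis by blast
qed

lemma supnorm_upper: assumes "a \<in> A" shows "cmod (a x) \<le> supnorm a"
proof -
  obtain M where "\<And>x. cmod (a x) \<le> M" using algA_bounded[OF assms] by blast
  then show ?thesis unfolding supnorm_def by (intro cSUP_upper bdd_aboveI[of _ M]) auto
qed

lemma algA_add: assumes "a \<in> A" "b \<in> A" shows "(\<lambda>x. a x + b x) \<in> A"
  unfolding algA_iff
proof (intro allI impI)
  fix e :: real assume "e > 0"
  then obtain f g f' g' where "f \<in> B" "g \<in> B" "f' \<in> B" "g' \<in> B"
    and fg: "\<And>x. cmod (a x - cplx f g x) \<le> e/2" "\<And>x. cmod (b x - cplx f' g' x) \<le> e/2"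
    using assms unfolding algA_iff by (meson half_gt_zero)
  have "cmod (a x + b x - cplx (\<lambda>x. f x + f' x) (\<lambda>x. g x + g' x) x) \<le> e" for x
    using norm_triangle_ineq[of "a x - cplx f g x" "b x - cplx f' g' x"] fg[of x]
    by (simp add: cplx_def algebra_simps)
  moreover have "(\<lambda>x. f x + f' x) \<in> B" "(\<lambda>x. g x + g' x) \<in> B"
    using \<open>f \<in> B\<close> \<open>g \<in> B\<close> \<open>f' \<in> B\<close> \<open>g' \<in> B\<close> by (auto intro: B_add)
  ultimately show "\<exists>f\<in>B. \<exists>g\<in>B. \<forall>x. cmod (a x + b x - cplx f g x) \<le> e"
    by blast
qed

lemma algA_scale: assumes "a \<in> A" shows "(\<lambda>x. c * a x) \<in> A"
  unfolding algA_iff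
proof (intro allI impI)
  fix e :: real assume "e > 0"
  then have "e / (cmod c + 1) > 0" by (intro divide_pos_pos add_nonneg_pos) auto
  then obtain f g where "f \<in> B" "g \<in> B" and fg: "\<And>x. cmod (a x - cplx f g x) \<le> e / (cmod c + 1)"
    using assms unfolding algA_iff by blast
  have "c * a x - cplx (\<lambda>x. Re c * f x - Im c * g x) (\<lambda>x. Im c * f x + Re c * g x) x
      = c * (a x - cplx f g x)" for x
    by (simp add: cplx_def complex_eq_iff algebra_simps)
  moreover have "cmod c * cmod (a x - cplx f g x) \<le> e" for x
  proof -
    have "cmod c * cmod (a x - cplx f g x) \<le> cmod c * (e / (cmod c + 1))"
      using fg[of x] by (rule mult_left_mono) simp
    also have "\<dots> = e * (cmod c / (cmod c + 1))" by simp
    also have "\<dots> \<le> e" using \<open>e > 0\<close> by (smt (verit) divide_le_eq_1 norm_ge_zero mult_left_le)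
    finally show ?thesis .
  qed
  ultimately have "cmod (c * a x - cplx (\<lambda>x. Re c * f x - Im c * g x) (\<lambda>x. Im c * f x + Re c * g x) x) \<le> e" for x
    by (simp add: norm_mult)
  moreover have "(\<lambda>x. Re c * f x - Im c * g x) \<in> B" "(\<lambda>x. Im c * f x + Re c * g x) \<in> B"
    using \<open>f \<in> B\<close> \<open>g \<in> B\<close> by (auto intro!: B_add B_diff B_scale)
  ultimately show "\<exists>f\<in>B. \<exists>g\<in>B. \<forall>x. cmod (c * a x - cplx f g x) \<le> e"
    by blast
qed

lemma algA_diff: "a \<in> A \<Longrightarrow> b \<in> A \<Longrightarrow> (\<lambda>x. a x - b x) \<in> A"
  using algA_add[of a "\<lambda>x. (-1) * b x"] algA_scale[of b "-1"] by simp

lemma algA_mult: assumes a: "a \<in> A" and b: "b \<in> A" shows "(\<lambda>x. a x * b x) \<in> A"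
  unfolding algA_iff
proof (intro allI impI)
  fix e :: real assume "e > 0"
  obtain Ma Mb where M: "Ma \<ge> 0" "\<And>x. cmod (a x) \<le> Ma" "Mb \<ge> 0" "\<And>x. cmod (b x) \<le> Mb"
    using algA_bounded[OF a] algA_bounded[OF b] by blast
  define d where "d = min 1 (e / (Ma + Mb + 1))"
  have d: "0 < d" "d \<le> 1" "d * (Ma + Mb + 1) \<le> e"
    using \<open>e > 0\<close> M by (auto simp: d_def min_def le_divide_eq intro!: divide_pos_pos)
  obtain f g f' g' where B: "f \<in> B" "g \<in> B" "f' \<in> B" "g' \<in> B"
    and fg: "\<And>x. cmod (a x - cplx f g x) \<le> d" "\<And>x. cmod (b x - cplx f' g' x) \<le> d"
    using a b d(1) unfolding algA_iff by meson
  define p where "p = (\<lambda>x. f x * f' x - g x * g' x)"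
  define q where "q = (\<lambda>x. f x * g' x + g x * f' x)"
  have "cmod (a x * b x - cplx p q x) \<le> e" for x
  proof -
    have pq: "cplx p q x = cplx f g x * cplx f' g' x"
      by (simp add: p_def q_def cplx_def complex_eq_iff algebra_simps)
    have "cmod (cplx f' g' x) \<le> Mb + 1"
      using norm_triangle_sub[of "cplx f' g' x" "b x"] M(4)[of x] fg(2)[of x] d(2)
      by (simp add: norm_minus_commute)
    moreover have "a x * b x - cplx p q x = a x * (b x - cplx f' g' x) + (a x - cplx f g x) * cplx f' g' x"
      unfolding pq by (simp add: algebra_simps)
    ultimately have "cmod (a x * b x - cplx p q x) \<le> Ma * d + d * (Mb + 1)"
      using norm_triangle_ineq[of "a x * (b x - cplx f' g' x)" "(a x - cplx f g x) * cplx f' g' x"]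
        mult_mono[OF M(2)[of x] fg(2)[of x]] mult_mono[OF fg(1)[of x], of "cmod (cplx f' g' x)" "Mb + 1"]
        M(1) d(1) by (simp add: norm_mult)
    then show ?thesis using d(3) by (simp add: algebra_simps)
  qed
  moreover have "p \<in> B" "q \<in> B" unfolding p_def q_def using B by (auto intro!: B_add B_diff B_mult)
  ultimately show "\<exists>f\<in>B. \<exists>g\<in>B. \<forall>x. cmod (a x * b x - cplx f g x) \<le> e" by blast
qed

abbreviation \<Delta> :: "(('x \<Rightarrow> complex) \<Rightarrow> complex) set" where "\<Delta> \<equiv> spectrum_of B"

lemma character_add: "\<phi> \<in> \<Delta> \<Longrightarrow> a \<in> A \<Longrightarrow> b \<in> A \<Longrightarrow> \<phi> (\<lambda>x. a x + b x) = \<phi> a + \<phi> b"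
  and character_scale: "\<phi> \<in> \<Delta> \<Longrightarrow> a \<in> A \<Longrightarrow> \<phi> (\<lambda>x. c * a x) = c * \<phi> a"
  and character_mult: "\<phi> \<in> \<Delta> \<Longrightarrow> a \<in> A \<Longrightarrow> b \<in> A \<Longrightarrow> \<phi> (\<lambda>x. a x * b x) = \<phi> a * \<phi> b"
  and character_bounded: "\<phi> \<in> \<Delta> \<Longrightarrow> \<exists>C. \<forall>a\<in>A. cmod (\<phi> a) \<le> C * supnorm a"
  and character_nonzero: "\<phi> \<in> \<Delta> \<Longrightarrow> \<exists>a\<in>A. \<phi> a \<noteq> 0"
  and character_extensional: "\<phi> \<in> \<Delta> \<Longrightarrow> \<phi> \<in> extensional A"
  unfolding spectrum_of_def by blast+

lemma character_diff: "\<phi> \<in> \<Delta> \<Longrightarrow> a \<in> A \<Longrightarrow> b \<in> A \<Longrightarrow> \<phi> (\<lambda>x. a x - b x) = \<phi> a - \<phi> b"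
  using character_add[of \<phi> a "\<lambda>x. (-1) * b x"] character_scale[of \<phi> b "-1"] algA_scale[of b "-1"] by simp

text \<open>If multiplication by m acts on the character as the scalar \<mu>, then \<mu>^n \<phi>(a0) = \<phi>(m^n a0) grows
  at most like M^n; this is the spectral radius bound.\<close>
lemma character_eigenvalue_le:
  assumes \<phi>: "\<phi> \<in> \<Delta>"
    and m: "\<And>b. b \<in> A \<Longrightarrow> (\<lambda>x. m x * b x) \<in> A \<and> \<phi> (\<lambda>x. m x * b x) = \<mu> * \<phi> b"
    and M: "\<And>x. cmod (m x) \<le> M"
  shows "cmod \<mu> \<le> M"
proof -
  have M0: "0 \<le> M" using M[of undefined] norm_ge_zero order_trans by blast
  obtain a0 where a0: "a0 \<in> A" "\<phi> a0 \<noteq> 0" using character_nonzero[OF \<phi>] by blast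
  obtain K where K: "K \<ge> 0" "\<And>x. cmod (a0 x) \<le> K" using algA_bounded[OF a0(1)] by blast
  obtain C where C: "\<And>a. a \<in> A \<Longrightarrow> cmod (\<phi> a) \<le> C * supnorm a" using character_bounded[OF \<phi>] by blast
  define b where "b n = (\<lambda>x. m x ^ n * a0 x)" for n
  have b: "b n \<in> A \<and> \<phi> (b n) = \<mu> ^ n * \<phi> a0" for n
  proof (induction n)
    case 0 then show ?case using a0 by (simp add: b_def)
  next
    case (Suc n)
    have "b (Suc n) = (\<lambda>x. m x * b n x)" by (simp add: b_def fun_eq_iff)
    then show ?case using m[of "b n"] Suc by simp
  qed
  have "cmod \<mu> ^ n * cmod (\<phi> a0) \<le> (max C 0 * K) * M ^ n" for n
  proof -
    have bound: "cmod (b n x) \<le> M ^ n * K" for x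
      unfolding b_def norm_mult norm_power by (intro mult_mono power_mono M K M0 zero_le_power norm_ge_zero)
    have sup: "supnorm (b n) \<le> M ^ n * K"
      unfolding supnorm_def by (rule cSUP_least) (auto intro: bound)
    have sup0: "0 \<le> supnorm (b n)"
      using supnorm_upper[of "b n" undefined] b norm_ge_zero order_trans by blast
    have "cmod \<mu> ^ n * cmod (\<phi> a0) = cmod (\<phi> (b n))" using b[of n] by (simp add: norm_mult norm_power)
    also have "\<dots> \<le> C * supnorm (b n)" using C b by blast
    also have "\<dots> \<le> max C 0 * supnorm (b n)" using sup0 by (intro mult_right_mono) auto
    also have "\<dots> \<le> max C 0 * (M ^ n * K)" using sup by (intro mult_left_mono) auto
    finally show ?thesis by (simp add: algebra_simps)
  qed
  then show ?thesis using le_of_pow_mult_le[OF M0] a0(2) by (meson zero_less_norm_iff)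
qed

lemma character_norm_le:
  assumes "\<phi> \<in> \<Delta>" "a \<in> A" "\<And>x. cmod (a x) \<le> M" shows "cmod (\<phi> a) \<le> M"
  using character_eigenvalue_le[OF assms(1), of a "\<phi> a" M] assms algA_mult character_mult by blast

lemma character_le_supnorm: "\<phi> \<in> \<Delta> \<Longrightarrow> a \<in> A \<Longrightarrow> cmod (\<phi> a) \<le> supnorm a"
  using character_norm_le supnorm_upper by blast

text \<open>Multiplication by c + f with c = - (lo + hi) / 2 + i t acts on \<phi> as the scalar c + \<phi>(f) and
  is pointwise bounded by sqrt (((hi - lo) / 2)^2 + t^2).\<close>
lemma character_shifted_bound:
  assumes \<phi>: "\<phi> \<in> \<Delta>" and f: "f \<in> B" and range: "\<And>x. lo \<le> f x \<and> f x \<le> hi"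
  shows "(Re (\<phi> (cfun f)) - (lo + hi) / 2)\<^sup>2 + (Im (\<phi> (cfun f)) + t)\<^sup>2 \<le> ((hi - lo) / 2)\<^sup>2 + t\<^sup>2"
proof -
  define m r where "m = (lo + hi) / 2" and "r = (hi - lo) / 2"
  define c where "c = Complex (- m) t"
  have "(\<lambda>x. (c + cfun f x) * b x) \<in> A \<and> \<phi> (\<lambda>x. (c + cfun f x) * b x) = (c + \<phi> (cfun f)) * \<phi> b"
    if b: "b \<in> A" for b
  proof -
    have "(\<lambda>x. (c + cfun f x) * b x) = (\<lambda>x. c * b x + cfun f x * b x)"
      by (simp add: fun_eq_iff algebra_simps)
    then show ?thesis
      using b cfun_in_algA[OF f] algA_scale[OF b] algA_mult[OF cfun_in_algA[OF f] b]
        algA_add[OF algA_scale[OF b] algA_mult[OF cfun_in_algA[OF f] b]]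
        character_add[OF \<phi> algA_scale[OF b] algA_mult[OF cfun_in_algA[OF f] b]]
        character_scale[OF \<phi> b] character_mult[OF \<phi> cfun_in_algA[OF f] b]
      by (simp add: algebra_simps)
  qed
  moreover have "cmod (c + cfun f x) \<le> sqrt (r\<^sup>2 + t\<^sup>2)" for x
  proof -
    have "\<bar>f x - m\<bar> \<le> r" using range[of x] by (auto simp: m_def r_def abs_le_iff field_simps)
    then have "(f x - m)\<^sup>2 \<le> r\<^sup>2" by (metis abs_ge_zero power2_abs power_mono)
    moreover have "c + cfun f x = Complex (f x - m) t" by (simp add: c_def cfun_def complex_eq_iff)
    ultimately show ?thesis by (simp add: cmod_def)
  qed
  ultimately have "cmod (c + \<phi> (cfun f)) \<le> sqrt (r\<^sup>2 + t\<^sup>2)"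
    by (rule character_eigenvalue_le[OF \<phi>])
  then have "(cmod (c + \<phi> (cfun f)))\<^sup>2 \<le> (sqrt (r\<^sup>2 + t\<^sup>2))\<^sup>2"
    by (rule power_mono) simp
  then have "(cmod (c + \<phi> (cfun f)))\<^sup>2 \<le> r\<^sup>2 + t\<^sup>2" by simp
  then show ?thesis unfolding cmod_power2 c_def m_def[symmetric] r_def[symmetric] by (simp add: algebra_simps)
qed

text \<open>Expanding the square, the term 2 t Im (\<phi> f) would violate the bound for a suitable t.\<close>
lemma character_cfun_range:
  assumes \<phi>: "\<phi> \<in> \<Delta>" and f: "f \<in> B" and range: "\<And>x. lo \<le> f x \<and> f x \<le> hi"
  shows "Im (\<phi> (cfun f)) = 0" "lo \<le> Re (\<phi> (cfun f))" "Re (\<phi> (cfun f)) \<le> hi"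
proof -
  define \<alpha> where "\<alpha> = Re (\<phi> (cfun f))"
  define \<beta> where "\<beta> = Im (\<phi> (cfun f))"
  have bound: "(\<alpha> - (lo + hi) / 2)\<^sup>2 + (\<beta> + t)\<^sup>2 \<le> ((hi - lo) / 2)\<^sup>2 + t\<^sup>2" for t
    using character_shifted_bound[OF \<phi> f range] unfolding \<alpha>_def \<beta>_def .
  show "Im (\<phi> (cfun f)) = 0"
  proof (rule ccontr)
    assume "Im (\<phi> (cfun f)) \<noteq> 0"
    define t where "t = (((hi - lo) / 2)\<^sup>2 + 1) / (2 * \<beta>)"
    have "2 * \<beta> * t = ((hi - lo) / 2)\<^sup>2 + 1" using \<open>Im (\<phi> (cfun f)) \<noteq> 0\<close> by (simp add: t_def \<beta>_def)
    moreover have "(\<beta> + t)\<^sup>2 = \<beta>\<^sup>2 + 2 * \<beta> * t + t\<^sup>2" by (simp add: power2_sum)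
    ultimately show False
      using bound[of t] zero_le_power2[of "\<alpha> - (lo + hi) / 2"] zero_le_power2[of \<beta>] by linarith
  qed
  then have "(\<alpha> - (lo + hi) / 2)\<^sup>2 \<le> ((hi - lo) / 2)\<^sup>2" using bound[of 0] by (simp add: \<beta>_def)
  moreover have "lo \<le> hi" using range[of undefined] by linarith
  ultimately have "\<bar>\<alpha> - (lo + hi) / 2\<bar> \<le> (hi - lo) / 2" using abs_le_square_iff by force
  then show "lo \<le> Re (\<phi> (cfun f))" "Re (\<phi> (cfun f)) \<le> hi" by (simp_all add: \<alpha>_def abs_le_iff field_simps)
qed

definition hat :: "('x \<Rightarrow> real) \<Rightarrow> (('x \<Rightarrow> complex) \<Rightarrow> complex) \<Rightarrow> real" where
  "hat f \<phi> = Re (\<phi> (cfun f))"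

lemma character_cfun: assumes "\<phi> \<in> \<Delta>" "f \<in> B" shows "\<phi> (cfun f) = complex_of_real (hat f \<phi>)"
proof -
  obtain C where C: "\<And>x. \<bar>f x\<bar> \<le> C" using B_bounded assms by blast
  have "-C \<le> f x \<and> f x \<le> C" for x using C[of x] by (simp add: abs_le_iff)
  then have "Im (\<phi> (cfun f)) = 0" using character_cfun_range(1)[OF assms] by blast
  then show ?thesis by (simp add: hat_def complex_eq_iff)
qed

lemma hat_nonneg: assumes "\<phi> \<in> \<Delta>" "f \<in> B" "\<And>x. 0 \<le> f x" shows "0 \<le> hat f \<phi>"
proof -
  obtain C where C: "\<And>x. \<bar>f x\<bar> \<le> C" using B_bounded assms by blast
  have "0 \<le> f x \<and> f x \<le> C" for x using assms(3)[of x] C[of x] by (simp add: abs_le_iff)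
  then show ?thesis unfolding hat_def by (rule character_cfun_range(2)[OF assms(1,2)])
qed

lemma hat_le_1: assumes "\<phi> \<in> \<Delta>" "f \<in> B" "\<And>x. f x \<le> 1" shows "hat f \<phi> \<le> 1"
proof -
  obtain C where C: "\<And>x. \<bar>f x\<bar> \<le> C" using B_bounded assms by blast
  have "-C \<le> f x \<and> f x \<le> 1" for x using assms(3)[of x] C[of x] by (simp add: abs_le_iff)
  then show ?thesis unfolding hat_def by (rule character_cfun_range(3)[OF assms(1,2)])
qed

lemma hat_add: "\<phi> \<in> \<Delta> \<Longrightarrow> f \<in> B \<Longrightarrow> g \<in> B \<Longrightarrow> hat (\<lambda>x. f x + g x) \<phi> = hat f \<phi> + hat g \<phi>"
proof -
  have "cfun (\<lambda>x. f x + g x) = (\<lambda>x. cfun f x + cfun g x)" by (simp add: cfun_def fun_eq_iff)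
  then show "\<phi> \<in> \<Delta> \<Longrightarrow> f \<in> B \<Longrightarrow> g \<in> B \<Longrightarrow> ?thesis" by (simp add: hat_def character_add cfun_in_algA)
qed

lemma hat_scale: "\<phi> \<in> \<Delta> \<Longrightarrow> f \<in> B \<Longrightarrow> hat (\<lambda>x. c * f x) \<phi> = c * hat f \<phi>"
proof -
  have "cfun (\<lambda>x. c * f x) = (\<lambda>x. complex_of_real c * cfun f x)" by (simp add: cfun_def fun_eq_iff)
  then show "\<phi> \<in> \<Delta> \<Longrightarrow> f \<in> B \<Longrightarrow> ?thesis" by (simp add: hat_def character_scale cfun_in_algA)
qed

lemma hat_mult:
  assumes "\<phi> \<in> \<Delta>" "f \<in> B" "g \<in> B" shows "hat (\<lambda>x. f x * g x) \<phi> = hat f \<phi> * hat g \<phi>"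
proof -
  have "cfun (\<lambda>x. f x * g x) = (\<lambda>x. cfun f x * cfun g x)" by (simp add: cfun_def fun_eq_iff)
  then have "\<phi> (cfun (\<lambda>x. f x * g x)) = complex_of_real (hat f \<phi>) * complex_of_real (hat g \<phi>)"
    using assms by (simp add: character_mult cfun_in_algA character_cfun)
  then show ?thesis by (simp add: hat_def)
qed

lemma hat_diff: "\<phi> \<in> \<Delta> \<Longrightarrow> f \<in> B \<Longrightarrow> g \<in> B \<Longrightarrow> hat (\<lambda>x. f x - g x) \<phi> = hat f \<phi> - hat g \<phi>"
  using hat_add[of \<phi> f "\<lambda>x. (-1) * g x"] hat_scale[of \<phi> g "-1"] B_scale[of g "-1"] by simp

lemma hat_zero: "\<phi> \<in> \<Delta> \<Longrightarrow> hat (\<lambda>x. 0) \<phi> = 0"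
  using hat_scale[OF _ B_zero, of \<phi> 0] by simp

lemma hat_sum:
  assumes "\<phi> \<in> \<Delta>"
  shows "finite G \<Longrightarrow> (\<And>j. j \<in> G \<Longrightarrow> F j \<in> B) \<Longrightarrow> hat (\<lambda>x. \<Sum>j\<in>G. F j x) \<phi> = (\<Sum>j\<in>G. hat (F j) \<phi>)"
proof (induction G rule: finite_induct)
  case (insert a G)
  then show ?case using assms hat_add[of \<phi> "F a" "\<lambda>x. \<Sum>j\<in>G. F j x"] B_sum[of G F] by simp
qed (simp add: assms hat_zero)

text \<open>The positive and negative parts p, q of f satisfy p q = 0, so their (nonnegative) images do too.\<close>
lemma hat_max_0: assumes \<phi>: "\<phi> \<in> \<Delta>" and f: "f \<in> B" shows "hat (\<lambda>x. max (f x) 0) \<phi> = max (hat f \<phi>) 0"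
proof -
  define p where "p = (\<lambda>x. max (f x) 0)"
  define q where "q = (\<lambda>x. max ((-1) * f x) 0)"
  have p: "p \<in> B" unfolding p_def by (rule B_max[OF f B_zero])
  have q: "q \<in> B" unfolding q_def by (rule B_max[OF B_scale[OF f] B_zero])
  have "(\<lambda>x. p x * q x) = (\<lambda>x. 0)" "(\<lambda>x. p x - q x) = f" by (auto simp: p_def q_def fun_eq_iff max_def)
  then have "hat p \<phi> * hat q \<phi> = 0" "hat p \<phi> - hat q \<phi> = hat f \<phi>"
    using hat_mult[OF \<phi> p q] hat_diff[OF \<phi> p q] hat_zero[OF \<phi>] by auto
  moreover have "0 \<le> hat p \<phi>" "0 \<le> hat q \<phi>" using hat_nonneg[OF \<phi>] p q by (auto simp: p_def q_def)
  ultimately show ?thesis unfolding p_def[symmetric] by (auto simp: max_def)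
qed

lemma hat_max:
  assumes \<phi>: "\<phi> \<in> \<Delta>" and "f \<in> B" "g \<in> B"
  shows "hat (\<lambda>x. max (f x) (g x)) \<phi> = max (hat f \<phi>) (hat g \<phi>)"
proof -
  have "(\<lambda>x. max (f x) (g x)) = (\<lambda>x. g x + max (f x - g x) 0)" by (auto simp: fun_eq_iff max_def)
  then show ?thesis
    using hat_add[OF \<phi> \<open>g \<in> B\<close>, of "\<lambda>x. max (f x - g x) 0"] hat_max_0[OF \<phi> B_diff] hat_diff[OF assms]
      B_max[OF B_diff B_zero] assms by (auto simp: max_def)
qed

lemma hat_abs: assumes \<phi>: "\<phi> \<in> \<Delta>" and f: "f \<in> B" shows "hat (\<lambda>x. \<bar>f x\<bar>) \<phi> = \<bar>hat f \<phi>\<bar>"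
proof -
  have "(\<lambda>x. \<bar>f x\<bar>) = (\<lambda>x. max (f x) ((-1) * f x))" by (auto simp: fun_eq_iff)
  then show ?thesis using hat_max[OF \<phi> f B_scale[OF f, of "-1"]] hat_scale[OF \<phi> f, of "-1"] by (auto simp: max_def)
qed

text \<open>With g = min f 1 one has g (f - g) = f - g, which pins hat g to 1 or to hat f.\<close>
lemma hat_min_1: assumes \<phi>: "\<phi> \<in> \<Delta>" and f: "f \<in> B" shows "hat (\<lambda>x. min (f x) 1) \<phi> = min (hat f \<phi>) 1"
proof -
  define g where "g = (\<lambda>x. min (f x) 1)"
  have g: "g \<in> B" and fg: "(\<lambda>x. f x - g x) \<in> B" unfolding g_def using f by (auto intro: B_min_1 B_diff)
  have "(\<lambda>x. g x * (f x - g x)) = (\<lambda>x. f x - g x)" by (auto simp: g_def fun_eq_iff min_def)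
  then have "(hat g \<phi> - 1) * (hat f \<phi> - hat g \<phi>) = 0"
    using hat_mult[OF \<phi> g fg] hat_diff[OF \<phi> f g] by (simp add: algebra_simps)
  moreover have "hat g \<phi> \<le> 1" "0 \<le> hat f \<phi> - hat g \<phi>"
    using hat_le_1[OF \<phi> g] hat_nonneg[OF \<phi> fg] hat_diff[OF \<phi> f g] by (auto simp: g_def)
  ultimately show ?thesis unfolding g_def[symmetric] by (auto simp: min_def)
qed

lemmas B_closed = B_add B_diff B_scale B_mult B_abs B_max B_min_1 B_zero
lemmas hat_ops = hat_add hat_diff hat_scale hat_mult hat_abs hat_max hat_min_1 hat_zero

lemma exists_truncation:
  assumes w: "w \<in> B" and "t > 0"
  obtains g where "g \<in> B" "\<And>x. g x = max (w x - t) 0" "\<And>\<phi>. \<phi> \<in> \<Delta> \<Longrightarrow> hat g \<phi> = max (hat w \<phi> - t) 0"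
proof -
  define g where "g x = w x - t * min (inverse t * w x) 1" for x
  show ?thesis
  proof (rule that)
    show "g \<in> B" unfolding g_def[abs_def] by (intro B_diff B_scale B_min_1 w)
    show "g x = max (w x - t) 0" for x using \<open>t > 0\<close> by (auto simp: g_def min_def max_def field_simps)
    show "hat g \<phi> = max (hat w \<phi> - t) 0" if "\<phi> \<in> \<Delta>" for \<phi>
    proof -
      have "hat g \<phi> = hat w \<phi> - t * min (inverse t * hat w \<phi>) 1"
        unfolding g_def[abs_def] using that w by (simp add: hat_diff hat_scale hat_min_1 B_diff B_scale B_min_1)
      then show ?thesis using \<open>t > 0\<close> by (auto simp: min_def max_def field_simps)
    qed
  qed
qed

section \<open>The Gelfand topology and Urysohn functions\<close>

abbreviation T :: "(('x \<Rightarrow> complex) \<Rightarrow> complex) topology" where "T \<equiv> gelfand_top B"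

lemma spectrum_subset_PiE: "\<Delta> \<subseteq> (\<Pi>\<^sub>E a\<in>A. UNIV)"
  using character_extensional by (auto simp: PiE_def)

lemma topspace_gelfand_top: "topspace T = \<Delta>"
  unfolding gelfand_top_def using spectrum_subset_PiE by auto

lemma Hausdorff_gelfand_top: "Hausdorff_space T"
  unfolding gelfand_top_def by (intro Hausdorff_space_subtopology) (simp add: Hausdorff_space_product_topology)

lemma continuous_map_hat: assumes "f \<in> B" shows "continuous_map T euclideanreal (hat f)"
proof -
  have "continuous_map T euclidean (\<lambda>\<phi>. \<phi> (cfun f))"
    unfolding gelfand_top_def using cfun_in_algA[OF assms]
    by (intro continuous_map_from_subtopology continuous_map_product_projection)
  then have "continuous_map T euclideanreal (Re \<circ> (\<lambda>\<phi>. \<phi> (cfun f)))"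
    by (rule continuous_map_compose) (simp add: continuous_on_Re continuous_on_id)
  moreover have "Re \<circ> (\<lambda>\<phi>. \<phi> (cfun f)) = hat f" by (simp add: fun_eq_iff hat_def)
  ultimately show ?thesis by simp
qed

lemma openin_hat_pos: "f \<in> B \<Longrightarrow> openin T {\<phi> \<in> \<Delta>. 0 < hat f \<phi>}"
  using openin_continuous_map_preimage[OF continuous_map_hat, of f "{0<..}"] by (simp add: topspace_gelfand_top)

lemma character_cplx:
  assumes "\<phi> \<in> \<Delta>" "f \<in> B" "g \<in> B" shows "\<phi> (cplx f g) = cplx (\<lambda>\<phi>. hat f \<phi>) (\<lambda>\<phi>. hat g \<phi>) \<phi>"
proof -
  have "cplx f g = (\<lambda>x. cfun f x + \<i> * cfun g x)" by (simp add: cplx_def cfun_def fun_eq_iff)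
  then show ?thesis
    using assms character_add[OF assms(1) cfun_in_algA[OF assms(2)] algA_scale[OF cfun_in_algA[OF assms(3)]]]
    by (simp add: character_scale cfun_in_algA character_cfun cplx_def)
qed

lemma gelfand_top_nbhd_algA:
  assumes "openin T U" "\<phi>0 \<in> U"
  obtains F \<epsilon> where "finite F" "F \<subseteq> A" "\<epsilon> > 0" "\<And>\<phi>. \<phi> \<in> \<Delta> \<Longrightarrow> (\<forall>a\<in>F. cmod (\<phi> a - \<phi>0 a) < \<epsilon>) \<Longrightarrow> \<phi> \<in> U"
proof -
  obtain V where V: "openin (product_topology (\<lambda>_. euclidean) A) V" "U = V \<inter> \<Delta>"
    using assms(1) unfolding gelfand_top_def openin_subtopology by blast
  have "\<phi>0 \<in> V" using V(2) assms(2) by blast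
  then obtain W where W: "finite {a \<in> A. W a \<noteq> UNIV}" "\<forall>a\<in>A. open (W a)" "\<phi>0 \<in> Pi\<^sub>E A W" "Pi\<^sub>E A W \<subseteq> V"
    using V(1) unfolding openin_product_topology_alt by auto
  define F where "F = {a \<in> A. W a \<noteq> UNIV}"
  have "\<forall>a\<in>F. \<exists>e>0. ball (\<phi>0 a) e \<subseteq> W a"
    using W(2,3) by (auto simp: F_def PiE_def open_contains_ball)
  then obtain ee where ee: "\<And>a. a \<in> F \<Longrightarrow> ee a > 0 \<and> ball (\<phi>0 a) (ee a) \<subseteq> W a" by metis
  define \<epsilon> where "\<epsilon> = Min (insert 1 (ee ` F))"
  have "finite F" using W(1) by (simp add: F_def)
  then have "\<epsilon> > 0" using ee by (auto simp: \<epsilon>_def Min_gr_iff)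
  have \<epsilon>_le: "\<epsilon> \<le> ee a" if "a \<in> F" for a
    using \<open>finite F\<close> that by (auto simp: \<epsilon>_def intro: Min_le)
  have "\<phi> \<in> U" if \<phi>: "\<phi> \<in> \<Delta>" and close: "\<forall>a\<in>F. cmod (\<phi> a - \<phi>0 a) < \<epsilon>" for \<phi>
  proof -
    have "\<phi> a \<in> W a" if "a \<in> A" for a
    proof (cases "a \<in> F")
      case True
      then have "dist (\<phi>0 a) (\<phi> a) < ee a" using close \<epsilon>_le[OF True] by (auto simp: dist_norm norm_minus_commute)
      then show ?thesis using ee[OF True] by auto
    qed (use that F_def in auto)
    then have "\<phi> \<in> Pi\<^sub>E A W" using character_extensional[OF \<phi>] by (auto simp: PiE_def)
    then show ?thesis using W(4) V(2) \<phi> by auto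
  qed
  moreover have "F \<subseteq> A" by (auto simp: F_def)
  ultimately show ?thesis using that \<open>finite F\<close> \<open>\<epsilon> > 0\<close> by blast
qed

text \<open>Each a in the finite set is within \<epsilon>/4 of some cplx f g, and characters are 1-Lipschitz for the
  sup norm, so closeness of hat f and hat g gives closeness at a.\<close>
lemma gelfand_top_nbhd:
  assumes U: "openin T U" "\<phi>0 \<in> U"
  obtains G \<eta> where "finite G" "G \<subseteq> B" "\<eta> > 0"
    "\<And>\<phi>. \<phi> \<in> \<Delta> \<Longrightarrow> (\<forall>f\<in>G. \<bar>hat f \<phi> - hat f \<phi>0\<bar> < \<eta>) \<Longrightarrow> \<phi> \<in> U"
proof -
  obtain F \<epsilon> where F: "finite F" "F \<subseteq> A" "\<epsilon> > 0"
    and close: "\<And>\<phi>. \<phi> \<in> \<Delta> \<Longrightarrow> (\<forall>a\<in>F. cmod (\<phi> a - \<phi>0 a) < \<epsilon>) \<Longrightarrow> \<phi> \<in> U"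
    using gelfand_top_nbhd_algA[OF U] by blast
  have \<phi>0: "\<phi>0 \<in> \<Delta>" using U openin_subset topspace_gelfand_top by blast
  have "\<epsilon>/4 > 0" using F(3) by simp
  have "\<exists>f\<in>B. \<exists>g\<in>B. \<forall>x. cmod (a x - cplx f g x) \<le> \<epsilon>/4" if "a \<in> F" for a
  proof -
    have "a \<in> A" using F(2) that by blast
    then show ?thesis using \<open>\<epsilon>/4 > 0\<close> unfolding algA_iff by blast
  qed
  then obtain p q where pq: "\<And>a. a \<in> F \<Longrightarrow> p a \<in> B \<and> q a \<in> B \<and> (\<forall>x. cmod (a x - cplx (p a) (q a) x) \<le> \<epsilon>/4)"
    by metis
  have cover: "\<phi> \<in> U" if \<phi>: "\<phi> \<in> \<Delta>" and near: "\<forall>f\<in>p ` F \<union> q ` F. \<bar>hat f \<phi> - hat f \<phi>0\<bar> < \<epsilon>/4" for \<phi>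
  proof (rule close[OF \<phi>], intro ballI)
    fix a assume a: "a \<in> F"
    have aA: "a \<in> A" and bA: "cplx (p a) (q a) \<in> A" using a F(2) pq cplx_in_algA by auto
    have approx: "cmod (\<psi> a - \<psi> (cplx (p a) (q a))) \<le> \<epsilon>/4" if "\<psi> \<in> \<Delta>" for \<psi>
      using character_norm_le[OF that algA_diff[OF aA bA], of "\<epsilon>/4"] character_diff[OF that aA bA] pq[OF a] by simp
    define b where "b = cplx (p a) (q a)"
    have "\<psi> b = complex_of_real (hat (p a) \<psi>) + \<i> * complex_of_real (hat (q a) \<psi>)" if "\<psi> \<in> \<Delta>" for \<psi>
      using character_cplx[OF that] pq[OF a] by (simp add: b_def cplx_def)
    then have eq: "\<phi> b - \<phi>0 b = cplx (\<lambda>_. hat (p a) \<phi> - hat (p a) \<phi>0) (\<lambda>_. hat (q a) \<phi> - hat (q a) \<phi>0) a"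
      using \<phi> \<phi>0 by (simp add: cplx_def algebra_simps)
    have "\<bar>hat (p a) \<phi> - hat (p a) \<phi>0\<bar> < \<epsilon>/4" "\<bar>hat (q a) \<phi> - hat (q a) \<phi>0\<bar> < \<epsilon>/4"
      using near a by auto
    then have "cmod (\<phi> b - \<phi>0 b) < \<epsilon>/4 + \<epsilon>/4"
      unfolding eq using norm_cplx_le[of "\<lambda>_. hat (p a) \<phi> - hat (p a) \<phi>0" "\<lambda>_. hat (q a) \<phi> - hat (q a) \<phi>0" a]
      by linarith
    moreover have "cmod (\<phi> a - \<phi>0 a) \<le> cmod (\<phi> a - \<phi> b) + cmod (\<phi> b - \<phi>0 b) + cmod (\<phi>0 b - \<phi>0 a)"
      using norm_triangle_ineq[of "\<phi> a - \<phi> b" "\<phi> b - \<phi>0 b"] norm_triangle_ineq[of "\<phi> a - \<phi>0 b" "\<phi>0 b - \<phi>0 a"]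
      by simp
    moreover have "cmod (\<phi> a - \<phi> b) \<le> \<epsilon>/4" "cmod (\<phi>0 b - \<phi>0 a) \<le> \<epsilon>/4"
      using approx[OF \<phi>] approx[OF \<phi>0] by (simp_all add: b_def norm_minus_commute)
    ultimately show "cmod (\<phi> a - \<phi>0 a) < \<epsilon>" by linarith
  qed
  have "finite (p ` F \<union> q ` F)" "p ` F \<union> q ` F \<subseteq> B" using F(1) pq by auto
  then show ?thesis using \<open>\<epsilon>/4 > 0\<close> cover by (rule that)
qed

lemma exists_hat_nonzero: assumes \<phi>: "\<phi> \<in> \<Delta>" shows "\<exists>f\<in>B. hat f \<phi> \<noteq> 0"
proof (rule ccontr)
  assume "\<not> (\<exists>f\<in>B. hat f \<phi> \<noteq> 0)"
  then have vanish: "\<phi> (cplx f g) = 0" if "f \<in> B" "g \<in> B" for f g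
    using character_cplx[OF \<phi> that] that by (simp add: cplx_def)
  obtain a where a: "a \<in> A" "\<phi> a \<noteq> 0" using character_nonzero[OF \<phi>] by blast
  have "cmod (\<phi> a) \<le> e" if "e > 0" for e
  proof -
    obtain f g where fg: "f \<in> B" "g \<in> B" "\<And>x. cmod (a x - cplx f g x) \<le> e"
      using a(1) \<open>e > 0\<close> unfolding algA_iff by meson
    then show ?thesis
      using character_norm_le[OF \<phi> algA_diff[OF a(1) cplx_in_algA[OF fg(1,2)]], of e]
        character_diff[OF \<phi> a(1) cplx_in_algA[OF fg(1,2)]] vanish[OF fg(1,2)] by simp
  qed
  then show False using a(2) by (metis dense not_le zero_less_norm_iff)
qed

text \<open>The bump is h = max (f - K |f - f f| - K D, 0), where hat f (\<phi>0) = 1 and D vanishes at \<phi>0 and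
  controls the deviation of every j in G; positivity of hat h then pins hat f near 1 and D near 0.\<close>
lemma exists_bump:
  assumes \<phi>0: "\<phi>0 \<in> \<Delta>" and G: "finite G" "G \<subseteq> B" and "\<eta> > 0"
  obtains h where "h \<in> B" "\<And>\<phi>. \<phi> \<in> \<Delta> \<Longrightarrow> 0 \<le> hat h \<phi>" "0 < hat h \<phi>0"
    "\<And>\<phi> j. \<phi> \<in> \<Delta> \<Longrightarrow> 0 < hat h \<phi> \<Longrightarrow> j \<in> G \<Longrightarrow> \<bar>hat j \<phi> - hat j \<phi>0\<bar> < \<eta>"
proof -
  obtain f0 where f0: "f0 \<in> B" "hat f0 \<phi>0 \<noteq> 0" using exists_hat_nonzero[OF \<phi>0] by blast
  define c where "c = 1 / hat f0 \<phi>0"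
  define f where "f x = c * f0 x" for x
  define D where "D x = (\<Sum>j\<in>G. \<bar>j x - hat j \<phi>0 * f x\<bar>)" for x
  define R where "R = (\<Sum>j\<in>G. \<bar>hat j \<phi>0\<bar>)"
  define K where "K = (2 + R) / \<eta> + 1"
  define h where "h x = max (f x - K * \<bar>f x - f x * f x\<bar> - K * D x) 0" for x
  have f: "f \<in> B" unfolding f_def[abs_def] using f0 by (simp add: B_closed)
  have D: "D \<in> B" unfolding D_def[abs_def] using G f by (intro B_sum) (auto simp: B_closed)
  have "h \<in> B" unfolding h_def[abs_def] using f D by (simp add: B_closed)
  have hat_f: "hat f \<phi>0 = 1" using hat_scale[OF \<phi>0 f0(1), of c] f0(2) by (simp add: f_def[abs_def] c_def)
  have hat_D: "hat D \<phi> = (\<Sum>j\<in>G. \<bar>hat j \<phi> - hat j \<phi>0 * hat f \<phi>\<bar>)" if "\<phi> \<in> \<Delta>" for \<phi>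
    unfolding D_def[abs_def] using that G f
    by (subst hat_sum) (auto simp: B_closed hat_ops subset_eq intro!: sum.cong)
  have hat_h: "hat h \<phi> = max (hat f \<phi> - K * \<bar>hat f \<phi> - hat f \<phi> * hat f \<phi>\<bar> - K * hat D \<phi>) 0"
    if "\<phi> \<in> \<Delta>" for \<phi>
    unfolding h_def[abs_def] using that f D by (simp add: B_closed hat_ops)
  show ?thesis
  proof (rule that)
    show "h \<in> B" by fact
    show "0 \<le> hat h \<phi>" if "\<phi> \<in> \<Delta>" for \<phi> using hat_h[OF that] by simp
    show "0 < hat h \<phi>0" using hat_h[OF \<phi>0] hat_D[OF \<phi>0] hat_f by simp
    show "\<bar>hat j \<phi> - hat j \<phi>0\<bar> < \<eta>" if \<phi>: "\<phi> \<in> \<Delta>" and "0 < hat h \<phi>" "j \<in> G" for \<phi> j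
    proof (rule bump_estimate)
      show "1 \<le> K" "(2 + R) / \<eta> < K" using \<open>\<eta> > 0\<close> G by (auto simp: K_def R_def sum_nonneg)
      show "0 < \<eta>" by fact
      show "0 \<le> hat D \<phi>" using hat_D[OF \<phi>] by (simp add: sum_nonneg)
      show "0 < hat f \<phi> - K * \<bar>hat f \<phi> - hat f \<phi> * hat f \<phi>\<bar> - K * hat D \<phi>"
        using hat_h[OF \<phi>] \<open>0 < hat h \<phi>\<close> by simp
      show "\<bar>hat j \<phi> - hat j \<phi>0 * hat f \<phi>\<bar> \<le> hat D \<phi>"
        unfolding hat_D[OF \<phi>] using G \<open>j \<in> G\<close> by (intro member_le_sum) auto
      show "\<bar>hat j \<phi>0\<bar> \<le> R" unfolding R_def using G \<open>j \<in> G\<close> by (intro member_le_sum) auto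
    qed
  qed
qed

lemma exists_hat_pos_inside:
  assumes U: "openin T U" "\<phi>0 \<in> U"
  obtains h where "h \<in> B" "\<And>\<phi>. \<phi> \<in> \<Delta> \<Longrightarrow> 0 \<le> hat h \<phi>" "0 < hat h \<phi>0"
    "\<And>\<phi>. \<phi> \<in> \<Delta> \<Longrightarrow> 0 < hat h \<phi> \<Longrightarrow> \<phi> \<in> U"
proof -
  obtain G \<eta> where G: "finite G" "G \<subseteq> B" "\<eta> > 0"
    and near: "\<And>\<phi>. \<phi> \<in> \<Delta> \<Longrightarrow> (\<forall>f\<in>G. \<bar>hat f \<phi> - hat f \<phi>0\<bar> < \<eta>) \<Longrightarrow> \<phi> \<in> U"
    using gelfand_top_nbhd[OF U] by blast
  have "\<phi>0 \<in> \<Delta>" using U openin_subset topspace_gelfand_top by blast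
  then obtain h where h: "h \<in> B" "\<And>\<phi>. \<phi> \<in> \<Delta> \<Longrightarrow> 0 \<le> hat h \<phi>" "0 < hat h \<phi>0"
    "\<And>\<phi> j. \<phi> \<in> \<Delta> \<Longrightarrow> 0 < hat h \<phi> \<Longrightarrow> j \<in> G \<Longrightarrow> \<bar>hat j \<phi> - hat j \<phi>0\<bar> < \<eta>"
    using exists_bump G by blast
  show ?thesis
  proof (rule that[OF h(1-3)])
    show "\<phi> \<in> U" if "\<phi> \<in> \<Delta>" "0 < hat h \<phi>" for \<phi> using near[OF that(1)] h(4)[OF that] by blast
  qed
qed

lemma exists_hat_pos_on_compact:
  assumes K: "compactin T K" and U: "openin T U" "K \<subseteq> U"
  obtains h where "h \<in> B" "\<And>\<phi>. \<phi> \<in> \<Delta> \<Longrightarrow> 0 \<le> hat h \<phi>" "\<And>\<phi>. \<phi> \<in> K \<Longrightarrow> 0 < hat h \<phi>"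
    "\<And>\<phi>. \<phi> \<in> \<Delta> \<Longrightarrow> 0 < hat h \<phi> \<Longrightarrow> \<phi> \<in> U"
proof -
  define H where "H = {h \<in> B. (\<forall>\<phi>\<in>\<Delta>. 0 \<le> hat h \<phi>) \<and> (\<forall>\<phi>\<in>\<Delta>. 0 < hat h \<phi> \<longrightarrow> \<phi> \<in> U)}"
  define pos where "pos h = {\<phi> \<in> \<Delta>. 0 < hat h \<phi>}" for h
  have "K \<subseteq> \<Delta>" using compactin_subset_topspace[OF K] by (simp add: topspace_gelfand_top)
  have "\<exists>h\<in>H. \<phi>0 \<in> pos h" if \<phi>0: "\<phi>0 \<in> K" for \<phi>0
  proof -
    obtain h where "h \<in> B" "\<And>\<phi>. \<phi> \<in> \<Delta> \<Longrightarrow> 0 \<le> hat h \<phi>" "0 < hat h \<phi>0"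
      "\<And>\<phi>. \<phi> \<in> \<Delta> \<Longrightarrow> 0 < hat h \<phi> \<Longrightarrow> \<phi> \<in> U"
      using exists_hat_pos_inside[OF U(1)] \<phi>0 U(2) by blast
    then show ?thesis using \<phi>0 \<open>K \<subseteq> \<Delta>\<close> unfolding H_def pos_def by blast
  qed
  then have "K \<subseteq> \<Union> (pos ` H)" by blast
  moreover have "\<forall>V\<in>pos ` H. openin T V" using openin_hat_pos by (auto simp: H_def pos_def)
  ultimately obtain \<F> where "finite \<F>" "\<F> \<subseteq> pos ` H" "K \<subseteq> \<Union>\<F>"
    using K unfolding compactin_def by meson
  then obtain H0 where H0: "finite H0" "H0 \<subseteq> H" "K \<subseteq> (\<Union>h\<in>H0. pos h)"
    by (metis finite_subset_image)
  define h0 where "h0 x = (\<Sum>h\<in>H0. h x)" for x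
  have B_H0: "h \<in> H0 \<Longrightarrow> h \<in> B" for h using H0(2) by (auto simp: H_def)
  have hat_h0: "hat h0 \<phi> = (\<Sum>h\<in>H0. hat h \<phi>)" if "\<phi> \<in> \<Delta>" for \<phi>
    unfolding h0_def[abs_def] using hat_sum[OF that H0(1) B_H0] .
  have nonneg: "0 \<le> hat h \<phi>" if "h \<in> H0" "\<phi> \<in> \<Delta>" for h \<phi> using that H0(2) by (auto simp: H_def)
  show ?thesis
  proof (rule that)
    show "h0 \<in> B" unfolding h0_def[abs_def] using H0(1) B_H0 by (rule B_sum)
    show "0 \<le> hat h0 \<phi>" if "\<phi> \<in> \<Delta>" for \<phi> using nonneg that by (simp add: hat_h0 sum_nonneg)
    show "0 < hat h0 \<phi>" if \<phi>: "\<phi> \<in> K" for \<phi>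
    proof -
      obtain h where "h \<in> H0" "0 < hat h \<phi>" using \<phi> H0(3) by (auto simp: pos_def)
      moreover have "hat h \<phi> \<le> (\<Sum>h\<in>H0. hat h \<phi>)"
        using calculation(1) H0(1) nonneg \<phi> \<open>K \<subseteq> \<Delta>\<close> by (intro member_le_sum) auto
      ultimately show ?thesis using hat_h0 \<phi> \<open>K \<subseteq> \<Delta>\<close> by auto
    qed
    show "\<phi> \<in> U" if \<phi>: "\<phi> \<in> \<Delta>" "0 < hat h0 \<phi>" for \<phi>
    proof -
      obtain h where "h \<in> H0" "0 < hat h \<phi>" using \<phi> hat_h0 by (metis not_le sum_nonpos)
      then show ?thesis using \<phi>(1) H0(2) by (auto simp: H_def)
    qed
  qed
qed

lemma exists_urysohn:
  assumes K: "compactin T K" and U: "openin T U" "K \<subseteq> U"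
  obtains h where "h \<in> B" "\<And>\<phi>. \<phi> \<in> \<Delta> \<Longrightarrow> 0 \<le> hat h \<phi> \<and> hat h \<phi> \<le> 1" "\<And>\<phi>. \<phi> \<in> K \<Longrightarrow> hat h \<phi> = 1"
    "\<And>\<phi>. \<phi> \<in> \<Delta> \<Longrightarrow> \<phi> \<notin> U \<Longrightarrow> hat h \<phi> = 0"
proof (cases "K = {}")
  case True
  then show ?thesis using that[OF B_zero] hat_zero by auto
next
  case False
  obtain h0 where h0: "h0 \<in> B" "\<And>\<phi>. \<phi> \<in> \<Delta> \<Longrightarrow> 0 \<le> hat h0 \<phi>" "\<And>\<phi>. \<phi> \<in> K \<Longrightarrow> 0 < hat h0 \<phi>"
    "\<And>\<phi>. \<phi> \<in> \<Delta> \<Longrightarrow> 0 < hat h0 \<phi> \<Longrightarrow> \<phi> \<in> U"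
    using exists_hat_pos_on_compact[OF assms] by blast
  have "compact (hat h0 ` K)"
    using image_compactin[OF K continuous_map_hat[OF h0(1)]] by simp
  then obtain m where m: "m \<in> hat h0 ` K" "\<And>t. t \<in> hat h0 ` K \<Longrightarrow> m \<le> t"
    using compact_attains_inf False by (metis image_is_empty)
  have "m > 0" using m(1) h0(3) by auto
  have "K \<subseteq> \<Delta>" using compactin_subset_topspace[OF K] by (simp add: topspace_gelfand_top)
  define c where "c = 1 / m"
  define h where "h x = min (c * h0 x) 1" for x
  have hat_h: "hat h \<phi> = min (c * hat h0 \<phi>) 1" if "\<phi> \<in> \<Delta>" for \<phi>
    using that h0(1) by (simp add: h_def[abs_def] B_closed hat_ops)
  show ?thesis
  proof (rule that)
    show "h \<in> B" using h0(1) by (simp add: h_def[abs_def] B_closed)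
    show "0 \<le> hat h \<phi> \<and> hat h \<phi> \<le> 1" if "\<phi> \<in> \<Delta>" for \<phi>
      using hat_h[OF that] h0(2)[OF that] \<open>m > 0\<close> by (simp add: c_def)
    show "hat h \<phi> = 1" if "\<phi> \<in> K" for \<phi>
      using hat_h m(2)[of "hat h0 \<phi>"] that \<open>K \<subseteq> \<Delta>\<close> \<open>m > 0\<close> by (auto simp: c_def field_simps)
    show "hat h \<phi> = 0" if "\<phi> \<in> \<Delta>" "\<phi> \<notin> U" for \<phi>
      using hat_h[OF that(1)] h0(2)[OF that(1)] h0(4)[OF that(1)] that(2) by force
  qed
qed

section \<open>Compactness of superlevel sets\<close>

abbreviation P :: "(('x \<Rightarrow> complex) \<Rightarrow> complex) topology" where
  "P \<equiv> product_topology (\<lambda>_. euclidean) A"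

definition contractive_multiplicative :: "(('x \<Rightarrow> complex) \<Rightarrow> complex) set" where
  "contractive_multiplicative = {\<phi> \<in> topspace P.
     (\<forall>(a, b)\<in>A \<times> A. \<phi> (\<lambda>x. a x + b x) = \<phi> a + \<phi> b) \<and>
     (\<forall>(a, c)\<in>A \<times> UNIV. \<phi> (\<lambda>x. c * a x) = c * \<phi> a) \<and>
     (\<forall>(a, b)\<in>A \<times> A. \<phi> (\<lambda>x. a x * b x) = \<phi> a * \<phi> b) \<and>
     (\<forall>a\<in>A. \<phi> a \<in> cball 0 (supnorm a))}"

lemma continuous_map_eval: "a \<in> A \<Longrightarrow> continuous_map P euclidean (\<lambda>\<phi>. \<phi> a)"
  by (rule continuous_map_product_projection)

lemma closedin_contractive_multiplicative: "closedin P contractive_multiplicative"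
proof -
  have "closedin P {\<phi> \<in> topspace P. \<forall>(a, b)\<in>A \<times> A. \<phi> (\<lambda>x. a x + b x) = \<phi> a + \<phi> b}"
    using closedin_continuous_maps_all_eq[of euclidean "A \<times> A" P "\<lambda>(a, b) \<phi>. \<phi> (\<lambda>x. a x + b x)" "\<lambda>(a, b) \<phi>. \<phi> a + \<phi> b"]
    by (force intro: continuous_map_eval continuous_map_add algA_add)
  moreover have "closedin P {\<phi> \<in> topspace P. \<forall>(a, c)\<in>A \<times> UNIV. \<phi> (\<lambda>x. c * a x) = c * \<phi> a}"
    using closedin_continuous_maps_all_eq[of euclidean "A \<times> UNIV" P "\<lambda>(a, c) \<phi>. \<phi> (\<lambda>x. c * a x)" "\<lambda>(a, c) \<phi>. c * \<phi> a"]
    by (force intro: continuous_map_eval continuous_map_mult algA_scale)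
  moreover have "closedin P {\<phi> \<in> topspace P. \<forall>(a, b)\<in>A \<times> A. \<phi> (\<lambda>x. a x * b x) = \<phi> a * \<phi> b}"
    using closedin_continuous_maps_all_eq[of euclidean "A \<times> A" P "\<lambda>(a, b) \<phi>. \<phi> (\<lambda>x. a x * b x)" "\<lambda>(a, b) \<phi>. \<phi> a * \<phi> b"]
    by (force intro: continuous_map_eval continuous_map_mult algA_mult)
  moreover have "closedin P {\<phi> \<in> topspace P. \<forall>a\<in>A. \<phi> a \<in> cball 0 (supnorm a)}"
    using closedin_continuous_maps_all_preimage[of A P euclidean "\<lambda>a \<phi>. \<phi> a" "\<lambda>a. cball 0 (supnorm a)"]
    by (simp add: continuous_map_eval flip: closed_closedin)
  ultimately have "closedin P ({\<phi> \<in> topspace P. \<forall>(a, b)\<in>A \<times> A. \<phi> (\<lambda>x. a x + b x) = \<phi> a + \<phi> b} \<inter>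
      {\<phi> \<in> topspace P. \<forall>(a, c)\<in>A \<times> UNIV. \<phi> (\<lambda>x. c * a x) = c * \<phi> a} \<inter>
      {\<phi> \<in> topspace P. \<forall>(a, b)\<in>A \<times> A. \<phi> (\<lambda>x. a x * b x) = \<phi> a * \<phi> b} \<inter>
      {\<phi> \<in> topspace P. \<forall>a\<in>A. \<phi> a \<in> cball 0 (supnorm a)})"
    by (intro closedin_Int)
  then show ?thesis unfolding contractive_multiplicative_def by (rule back_subst) auto
qed

lemma compactin_contractive_multiplicative: "compactin P contractive_multiplicative"
proof (rule closed_compactin)
  show "compactin P (Pi\<^sub>E A (\<lambda>a. cball 0 (supnorm a)))" by (simp add: compactin_PiE)
  show "contractive_multiplicative \<subseteq> Pi\<^sub>E A (\<lambda>a. cball 0 (supnorm a))"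
    by (auto simp: contractive_multiplicative_def PiE_def)
qed (rule closedin_contractive_multiplicative)

text \<open>For t > 0 the condition t \<le> Re (\<phi> w) already forces \<phi> \<noteq> 0, so this superlevel set of the
  compact set of contractive multiplicative functionals lies in the spectrum.\<close>
lemma superlevel_eq_contractive_multiplicative:
  assumes "w \<in> B" "t > 0"
  shows "{\<phi> \<in> \<Delta>. t \<le> hat w \<phi>} = {\<phi> \<in> contractive_multiplicative. t \<le> Re (\<phi> (cfun w))}"
proof (intro equalityI subsetI)
  fix \<phi> assume "\<phi> \<in> {\<phi> \<in> \<Delta>. t \<le> hat w \<phi>}"
  then show "\<phi> \<in> {\<phi> \<in> contractive_multiplicative. t \<le> Re (\<phi> (cfun w))}"
    using spectrum_subset_PiE character_add character_scale character_mult character_le_supnorm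
    by (auto simp: contractive_multiplicative_def hat_def)
next
  fix \<phi> assume \<phi>: "\<phi> \<in> {\<phi> \<in> contractive_multiplicative. t \<le> Re (\<phi> (cfun w))}"
  then have "\<phi> (cfun w) \<noteq> 0" using assms(2) by auto
  then have "\<phi> \<in> \<Delta>" using \<phi> cfun_in_algA[OF assms(1)]
    unfolding spectrum_of_def contractive_multiplicative_def by (auto simp: PiE_def intro!: exI[of _ 1])
  then show "\<phi> \<in> {\<phi> \<in> \<Delta>. t \<le> hat w \<phi>}" using \<phi> by (simp add: hat_def)
qed

lemma compactin_superlevel:
  assumes "w \<in> B" "t > 0" shows "compactin T {\<phi> \<in> \<Delta>. t \<le> hat w \<phi>}"
proof -
  have "continuous_map P euclideanreal (Re \<circ> (\<lambda>\<phi>. \<phi> (cfun w)))"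
    using continuous_map_eval[OF cfun_in_algA[OF assms(1)]]
    by (rule continuous_map_compose) (simp add: continuous_on_Re continuous_on_id)
  then have "continuous_map P euclideanreal (\<lambda>\<phi>. Re (\<phi> (cfun w)))" by (simp add: o_def)
  then have "closedin P {\<phi> \<in> topspace P. Re (\<phi> (cfun w)) \<in> {t..}}"
    by (rule closedin_continuous_map_preimage) simp
  then have "compactin P (contractive_multiplicative \<inter> {\<phi> \<in> topspace P. Re (\<phi> (cfun w)) \<in> {t..}})"
    by (intro closed_compactin[OF compactin_contractive_multiplicative] closedin_Int
        closedin_contractive_multiplicative) auto
  moreover have "contractive_multiplicative \<inter> {\<phi> \<in> topspace P. Re (\<phi> (cfun w)) \<in> {t..}}
      = {\<phi> \<in> contractive_multiplicative. t \<le> Re (\<phi> (cfun w))}"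
    by (auto simp: contractive_multiplicative_def)
  ultimately have "compactin P {\<phi> \<in> contractive_multiplicative. t \<le> Re (\<phi> (cfun w))}" by simp
  moreover have "{\<phi> \<in> contractive_multiplicative. t \<le> Re (\<phi> (cfun w))} \<subseteq> \<Delta>"
    using superlevel_eq_contractive_multiplicative[OF assms] by blast
  ultimately show ?thesis
    unfolding gelfand_top_def compactin_subtopology superlevel_eq_contractive_multiplicative[OF assms] by blast
qed

end

section \<open>Density of hat B in L2 of mu-hat\<close>

locale hat_measure = admissible B for B :: "('x \<Rightarrow> real) set" +
  fixes mu :: "'x set \<Rightarrow> ennreal" and \<nu> :: "(('x \<Rightarrow> complex) \<Rightarrow> complex) measure"
  assumes in_D: "in_D B mu" and is_hat_measure: "is_hat_measure B mu \<nu>"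
begin

lemma radon: "radon_on T \<nu>"
  using is_hat_measure unfolding is_hat_measure_def by blast

lemma space_nu: "space \<nu> = \<Delta>"
  using radon topspace_gelfand_top unfolding radon_on_def by simp

lemma sets_nu: "sets \<nu> = sigma_sets \<Delta> {U. openin T U}"
proof -
  have "sets \<nu> = sets (borel_of T)" using radon unfolding radon_on_def by blast
  also have "\<dots> = sigma_sets (topspace T) {U. openin T U}" unfolding borel_of_def
    by (rule sets_measure_of) (auto dest: openin_subset)
  finally show ?thesis by (simp add: topspace_gelfand_top)
qed

lemma openin_sets: "openin T U \<Longrightarrow> U \<in> sets \<nu>"
  unfolding sets_nu by auto

lemma closedin_sets: assumes "closedin T C" shows "C \<in> sets \<nu>"
proof -
  have "\<Delta> - (\<Delta> - C) \<in> sigma_sets \<Delta> {U. openin T U}"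
    using assms by (intro sigma_sets.Compl sigma_sets.Basic) (simp add: closedin_def topspace_gelfand_top)
  moreover have "C \<subseteq> \<Delta>" using closedin_subset[OF assms] by (simp add: topspace_gelfand_top)
  ultimately show ?thesis by (simp add: sets_nu double_diff)
qed

lemma compactin_sets: "compactin T K \<Longrightarrow> K \<in> sets \<nu>"
  using closedin_sets compactin_imp_closedin[OF Hausdorff_gelfand_top] by blast

lemma measurable_hat [measurable]: assumes "f \<in> B" shows "hat f \<in> borel_measurable \<nu>"
proof (rule borel_measurableI)
  fix S :: "real set" assume "open S"
  then have "openin T {\<phi> \<in> topspace T. hat f \<phi> \<in> S}"
    by (intro openin_continuous_map_preimage[OF continuous_map_hat[OF assms]]) auto
  moreover have "hat f -` S \<inter> space \<nu> = {\<phi> \<in> topspace T. hat f \<phi> \<in> S}"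
    by (auto simp: space_nu topspace_gelfand_top)
  ultimately show "hat f -` S \<inter> space \<nu> \<in> sets \<nu>" using openin_sets by simp
qed

lemma compactin_closure_support:
  assumes "g \<in> B" "w \<in> B" "t > 0" and supp: "\<And>\<phi>. \<phi> \<in> \<Delta> \<Longrightarrow> hat g \<phi> \<noteq> 0 \<Longrightarrow> t \<le> hat w \<phi>"
  shows "compactin T (T closure_of {\<phi> \<in> \<Delta>. \<phi> (cfun g) \<noteq> 0})"
proof -
  have K: "compactin T {\<phi> \<in> \<Delta>. t \<le> hat w \<phi>}" by (rule compactin_superlevel[OF assms(2,3)])
  have "{\<phi> \<in> \<Delta>. \<phi> (cfun g) \<noteq> 0} \<subseteq> {\<phi> \<in> \<Delta>. t \<le> hat w \<phi>}"
  proof (intro subsetI CollectI conjI)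
    fix \<phi> assume "\<phi> \<in> {\<phi> \<in> \<Delta>. \<phi> (cfun g) \<noteq> 0}"
    then have "\<phi> \<in> \<Delta>" "hat g \<phi> \<noteq> 0" using character_cfun[OF _ assms(1), of \<phi>] by auto
    then show "\<phi> \<in> \<Delta>" "t \<le> hat w \<phi>" using supp by auto
  qed
  then have "T closure_of {\<phi> \<in> \<Delta>. \<phi> (cfun g) \<noteq> 0} \<subseteq> {\<phi> \<in> \<Delta>. t \<le> hat w \<phi>}"
    by (rule closure_of_minimal[OF _ compactin_imp_closedin[OF Hausdorff_gelfand_top K]])
  then show ?thesis using closed_compactin[OF K] closedin_closure_of by blast
qed

text \<open>The defining property of \<nu>, applied to the constant sequence g.\<close>
lemma nn_integral_hat:
  assumes "g \<in> B" "\<And>x. 0 \<le> g x" "w \<in> B" "t > 0"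
    and "\<And>\<phi>. \<phi> \<in> \<Delta> \<Longrightarrow> hat g \<phi> \<noteq> 0 \<Longrightarrow> t \<le> hat w \<phi>"
  shows "(\<integral>\<^sup>+ \<phi>. ennreal (hat g \<phi>) \<partial>\<nu>) = ennreal (integral_mu B mu g)"
proof -
  note defining_property = is_hat_measure[unfolded is_hat_measure_def, THEN conjunct2, rule_format]
  have "(\<integral>\<^sup>+ \<phi>. ennreal (Re (\<phi> (cfun g))) \<partial>\<nu>) = (SUP n::nat. ennreal (integral_mu B mu g))"
    by (rule defining_property[OF cfun_in_algA[OF assms(1)] _ compactin_closure_support[OF assms(1,3,4,5)]])
      (use assms(1,2) in \<open>auto simp: cfun_def\<close>)
  then show ?thesis by (simp add: hat_def)
qed

text \<open>The truncations max (w - t) 0 of w are supported in the compact set where hat w \<ge> t, so the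
  defining property of \<nu> applies to them; monotone convergence as t tends to 0 gives the bound.\<close>
lemma nn_integral_hat_le:
  assumes w: "w \<in> B" "\<And>x. 0 \<le> w x"
  shows "(\<integral>\<^sup>+ \<phi>. ennreal (hat w \<phi>) \<partial>\<nu>) \<le> ennreal (integral_mu B mu w)"
proof -
  define u where "u n \<phi> = ennreal (max (hat w \<phi> - inverse (real (Suc n))) 0)" for n \<phi>
  have "integral\<^sup>N \<nu> (u n) \<le> ennreal (integral_mu B mu w)" for n
  proof -
    define t where "t = inverse (real (Suc n))"
    have "t > 0" by (simp add: t_def)
    then obtain g where g: "g \<in> B" "\<And>x. g x = max (w x - t) 0"
      "\<And>\<phi>. \<phi> \<in> \<Delta> \<Longrightarrow> hat g \<phi> = max (hat w \<phi> - t) 0"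
      using exists_truncation[OF w(1)] by blast
    have "integral\<^sup>N \<nu> (u n) = (\<integral>\<^sup>+ \<phi>. ennreal (hat g \<phi>) \<partial>\<nu>)"
      by (intro nn_integral_cong) (simp add: u_def t_def g(3) space_nu)
    also have "\<dots> = ennreal (integral_mu B mu g)"
    proof (rule nn_integral_hat[OF g(1) _ w(1) \<open>t > 0\<close>])
      show "0 \<le> g x" for x using g(2) by simp
      show "t \<le> hat w \<phi>" if "\<phi> \<in> \<Delta>" "hat g \<phi> \<noteq> 0" for \<phi>
        using that g(3)[OF that(1)] by (auto simp: max_def split: if_splits)
    qed
    also have "\<dots> \<le> ennreal (integral_mu B mu w)"
      using in_D g w \<open>t > 0\<close> unfolding integral_mu_def in_D_def
      by (intro ennreal_leI integral_mono) auto
    finally show ?thesis .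
  qed
  moreover have "(\<lambda>n. integral\<^sup>N \<nu> (u n)) \<longlonglongrightarrow> (\<integral>\<^sup>+ \<phi>. ennreal (max (hat w \<phi>) 0) \<partial>\<nu>)"
  proof (rule nn_integral_LIMSEQ)
    show "incseq u" unfolding u_def
      by (intro monoI le_funI ennreal_leI max.mono diff_left_mono) (auto simp: field_simps)
    show "u n \<in> borel_measurable \<nu>" for n unfolding u_def using measurable_hat[OF w(1)] by measurable
    show "(\<lambda>n. u n \<phi>) \<longlonglongrightarrow> ennreal (max (hat w \<phi>) 0)" for \<phi>
    proof -
      have "(\<lambda>n. max (hat w \<phi> - inverse (real (Suc n))) 0) \<longlonglongrightarrow> max (hat w \<phi> - 0) 0"
        by (intro tendsto_max tendsto_diff tendsto_const LIMSEQ_inverse_real_of_nat)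
      then show ?thesis unfolding u_def by (intro tendsto_ennrealI) simp
    qed
  qed
  ultimately have "(\<integral>\<^sup>+ \<phi>. ennreal (max (hat w \<phi>) 0) \<partial>\<nu>) \<le> ennreal (integral_mu B mu w)"
    by (intro LIMSEQ_le_const2) auto
  moreover have "(\<integral>\<^sup>+ \<phi>. ennreal (max (hat w \<phi>) 0) \<partial>\<nu>) = (\<integral>\<^sup>+ \<phi>. ennreal (hat w \<phi>) \<partial>\<nu>)"
    by (intro nn_integral_cong) (simp add: space_nu hat_nonneg[OF _ w] max_absorb1)
  ultimately show ?thesis by simp
qed

lemma integrable_hat_square: assumes "f \<in> B" shows "integrable \<nu> (\<lambda>\<phi>. (hat f \<phi>)\<^sup>2)"
proof (rule integrableI_nonneg)
  show "(\<lambda>\<phi>. (hat f \<phi>)\<^sup>2) \<in> borel_measurable \<nu>" using assms by measurable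
  have "(\<integral>\<^sup>+ \<phi>. ennreal ((hat f \<phi>)\<^sup>2) \<partial>\<nu>) = (\<integral>\<^sup>+ \<phi>. ennreal (hat (\<lambda>x. f x * f x) \<phi>) \<partial>\<nu>)"
    using assms by (intro nn_integral_cong) (simp add: space_nu hat_mult power2_eq_square)
  also have "\<dots> \<le> ennreal (integral_mu B mu (\<lambda>x. f x * f x))"
    using assms by (intro nn_integral_hat_le B_mult) auto
  finally show "(\<integral>\<^sup>+ \<phi>. ennreal ((hat f \<phi>)\<^sup>2) \<partial>\<nu>) < \<infinity>" by (rule le_less_trans) simp
qed simp

lemma outer_regular: "E \<in> sets \<nu> \<Longrightarrow> emeasure \<nu> E = (INF U\<in>{U. openin T U \<and> E \<subseteq> U}. emeasure \<nu> U)"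
  and inner_regular: "openin T U \<Longrightarrow> emeasure \<nu> U = (SUP K\<in>{K. compactin T K \<and> K \<subseteq> U}. emeasure \<nu> K)"
  using radon unfolding radon_on_def by blast+

lemma exists_open_superset:
  assumes "E \<in> sets \<nu>" "emeasure \<nu> E < c"
  obtains U where "openin T U" "E \<subseteq> U" "emeasure \<nu> U < c"
  using assms(2) unfolding outer_regular[OF assms(1)] INF_less_iff by blast

lemma exists_compact_subset:
  assumes "openin T U" "emeasure \<nu> U < \<infinity>" "0 < e"
  obtains K where "compactin T K" "K \<subseteq> U" "emeasure \<nu> (U - K) < e"
proof -
  have "\<exists>K. compactin T K \<and> K \<subseteq> U \<and> emeasure \<nu> U < emeasure \<nu> K + e"
  proof (cases "emeasure \<nu> U = 0")
    case True
    then show ?thesis using assms(3) by (intro exI[of _ "{}"]) auto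
  next
    case False
    then have "emeasure \<nu> U - e < emeasure \<nu> U"
      using assms(2,3) by (intro ennreal_between) (simp_all add: zero_less_iff_neq_zero)
    then obtain K where "compactin T K" "K \<subseteq> U" "emeasure \<nu> U - e < emeasure \<nu> K"
      unfolding inner_regular[OF assms(1)] less_SUP_iff by blast
    then show ?thesis using assms(2) ennreal_le_minus_iff linorder_not_less by blast
  qed
  then obtain K where K: "compactin T K" "K \<subseteq> U" "emeasure \<nu> U < emeasure \<nu> K + e" by blast
  have "emeasure \<nu> K \<le> emeasure \<nu> U" using K(2) openin_sets[OF assms(1)] by (rule emeasure_mono)
  then have "emeasure \<nu> (U - K) = emeasure \<nu> U - emeasure \<nu> K"
    using assms K openin_sets compactin_sets by (intro emeasure_Diff) auto
  also have "\<dots> < e"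
    using K(3) assms(2) \<open>emeasure \<nu> K \<le> emeasure \<nu> U\<close> by (simp add: add.commute minus_less_iff_ennreal)
  finally show ?thesis by (rule that[OF K(1,2)])
qed

text \<open>Inner regularity is only available for open sets: approximate U from inside by K1 and
  remove an open set V of small measure covering U - E.\<close>
lemma exists_compact_open_between:
  assumes E: "E \<in> sets \<nu>" "emeasure \<nu> E < \<infinity>" and "0 < e"
  obtains K U where "compactin T K" "openin T U" "K \<subseteq> E" "E \<subseteq> U" "emeasure \<nu> (U - K) < ennreal e"
proof -
  have "emeasure \<nu> E < emeasure \<nu> E + ennreal (e / 2)" using E(2) \<open>0 < e\<close> by simp
  then obtain U where U: "openin T U" "E \<subseteq> U" "emeasure \<nu> U < emeasure \<nu> E + ennreal (e / 2)"
    using exists_open_superset[OF E(1)] by blast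
  have U_sets: "U \<in> sets \<nu>" using openin_sets[OF U(1)] .
  have "emeasure \<nu> E + ennreal (e / 2) < \<infinity>" using E(2) by (simp add: less_top)
  then have "emeasure \<nu> U < \<infinity>" using U(3) by (rule order.strict_trans[rotated])
  have "emeasure \<nu> (U - E) = emeasure \<nu> U - emeasure \<nu> E"
    using E U U_sets by (intro emeasure_Diff) auto
  also have "\<dots> < ennreal (e / 2)"
    using U(3) E(2) emeasure_mono[OF U(2) U_sets] by (simp add: add.commute minus_less_iff_ennreal)
  finally obtain V where V: "openin T V" "U - E \<subseteq> V" "emeasure \<nu> V < ennreal (e / 2)"
    using exists_open_superset[of "U - E"] U_sets E(1) by blast
  have "0 < ennreal (e / 2)" using \<open>0 < e\<close> by simp
  then obtain K1 where K1: "compactin T K1" "K1 \<subseteq> U" "emeasure \<nu> (U - K1) < ennreal (e / 2)"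
    by (rule exists_compact_subset[OF U(1) \<open>emeasure \<nu> U < \<infinity>\<close>])
  have K: "compactin T (K1 - V)"
    using closed_compactin[OF K1(1)] compactin_imp_closedin[OF Hausdorff_gelfand_top K1(1)] V(1)
    by (meson Diff_subset closedin_diff)
  have small: "emeasure \<nu> (U - (K1 - V)) < ennreal e"
  proof -
    have "emeasure \<nu> (U - (K1 - V)) \<le> emeasure \<nu> ((U - K1) \<union> V)"
      using U_sets V(1) K1(1) openin_sets compactin_sets by (intro emeasure_mono) auto
    also have "\<dots> \<le> emeasure \<nu> (U - K1) + emeasure \<nu> V"
      using U_sets V(1) K1(1) openin_sets compactin_sets by (intro emeasure_subadditive) auto
    also have "\<dots> < ennreal (e / 2) + ennreal (e / 2)" using K1(3) V(3) by (rule add_strict_mono)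
    finally show ?thesis using \<open>0 < e\<close> by (simp flip: ennreal_plus)
  qed
  have "K1 - V \<subseteq> E" using K1(2) V(2) by blast
  from that[OF K U(1) this U(2) small] show ?thesis .
qed

definition L2_approximable :: "((('x \<Rightarrow> complex) \<Rightarrow> complex) \<Rightarrow> real) \<Rightarrow> bool" where
  "L2_approximable g \<longleftrightarrow> (\<forall>e>0. \<exists>f\<in>B. (\<integral>\<^sup>+ \<phi>. ennreal ((hat f \<phi> - g \<phi>)\<^sup>2) \<partial>\<nu>) < ennreal e)"

lemma L2_approximable_add:
  assumes [measurable]: "g1 \<in> borel_measurable \<nu>" "g2 \<in> borel_measurable \<nu>"
    and "L2_approximable g1" "L2_approximable g2"
  shows "L2_approximable (\<lambda>\<phi>. g1 \<phi> + g2 \<phi>)"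
  unfolding L2_approximable_def
proof (intro allI impI)
  fix e :: real assume "e > 0"
  then have "e / 4 > 0" by simp
  then obtain f1 f2 where f: "f1 \<in> B" "f2 \<in> B"
    and "(\<integral>\<^sup>+ \<phi>. ennreal ((hat f1 \<phi> - g1 \<phi>)\<^sup>2) \<partial>\<nu>) < ennreal (e / 4)"
      "(\<integral>\<^sup>+ \<phi>. ennreal ((hat f2 \<phi> - g2 \<phi>)\<^sup>2) \<partial>\<nu>) < ennreal (e / 4)"
    using assms(3,4) unfolding L2_approximable_def by blast
  then have "(\<integral>\<^sup>+ \<phi>. ennreal (((hat f1 \<phi> - g1 \<phi>) + (hat f2 \<phi> - g2 \<phi>))\<^sup>2) \<partial>\<nu>) < ennreal e"
    using f by (intro nn_integral_square_add_less) auto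
  moreover have "(\<integral>\<^sup>+ \<phi>. ennreal (((hat f1 \<phi> - g1 \<phi>) + (hat f2 \<phi> - g2 \<phi>))\<^sup>2) \<partial>\<nu>)
      = (\<integral>\<^sup>+ \<phi>. ennreal ((hat (\<lambda>x. f1 x + f2 x) \<phi> - (g1 \<phi> + g2 \<phi>))\<^sup>2) \<partial>\<nu>)"
    using f by (intro nn_integral_cong) (simp add: space_nu hat_add algebra_simps)
  ultimately show "\<exists>f\<in>B. (\<integral>\<^sup>+ \<phi>. ennreal ((hat f \<phi> - (g1 \<phi> + g2 \<phi>))\<^sup>2) \<partial>\<nu>) < ennreal e"
    using B_add[OF f] by (intro bexI) auto
qed

lemma L2_approximable_scale:
  assumes [measurable]: "g \<in> borel_measurable \<nu>" and "L2_approximable g"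
  shows "L2_approximable (\<lambda>\<phi>. c * g \<phi>)"
  unfolding L2_approximable_def
proof (intro allI impI)
  fix e :: real assume "e > 0"
  then have "e / (c\<^sup>2 + 1) > 0" by (intro divide_pos_pos) (auto intro: add_nonneg_pos)
  then obtain f where f: "f \<in> B" "(\<integral>\<^sup>+ \<phi>. ennreal ((hat f \<phi> - g \<phi>)\<^sup>2) \<partial>\<nu>) < ennreal (e / (c\<^sup>2 + 1))"
    using assms(2) unfolding L2_approximable_def by blast
  note [measurable] = measurable_hat[OF f(1)]
  have "(\<integral>\<^sup>+ \<phi>. ennreal ((hat (\<lambda>x. c * f x) \<phi> - c * g \<phi>)\<^sup>2) \<partial>\<nu>)
      = (\<integral>\<^sup>+ \<phi>. ennreal (c\<^sup>2) * ennreal ((hat f \<phi> - g \<phi>)\<^sup>2) \<partial>\<nu>)"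
  proof (intro nn_integral_cong)
    fix \<phi> assume "\<phi> \<in> space \<nu>"
    then have "(hat (\<lambda>x. c * f x) \<phi> - c * g \<phi>)\<^sup>2 = c\<^sup>2 * (hat f \<phi> - g \<phi>)\<^sup>2"
      using f(1) by (simp add: space_nu hat_scale power2_eq_square algebra_simps)
    then show "ennreal ((hat (\<lambda>x. c * f x) \<phi> - c * g \<phi>)\<^sup>2) = ennreal (c\<^sup>2) * ennreal ((hat f \<phi> - g \<phi>)\<^sup>2)"
      by (simp add: ennreal_mult)
  qed
  also have "\<dots> = ennreal (c\<^sup>2) * (\<integral>\<^sup>+ \<phi>. ennreal ((hat f \<phi> - g \<phi>)\<^sup>2) \<partial>\<nu>)"
    by (rule nn_integral_cmult) measurable
  also have "\<dots> \<le> ennreal (c\<^sup>2) * ennreal (e / (c\<^sup>2 + 1))" using f(2) by (intro mult_left_mono) auto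
  also have "\<dots> = ennreal (c\<^sup>2 * (e / (c\<^sup>2 + 1)))"
    using \<open>e / (c\<^sup>2 + 1) > 0\<close> by (intro ennreal_mult[symmetric]) auto
  also have "\<dots> < ennreal e"
  proof (intro ennreal_lessI)
    have "c\<^sup>2 * (e / (c\<^sup>2 + 1)) = e * (c\<^sup>2 / (c\<^sup>2 + 1))" by simp
    also have "\<dots> < e * 1"
    proof (intro mult_strict_left_mono \<open>e > 0\<close>)
      have "0 < c\<^sup>2 + 1" by (smt (verit) zero_le_power2)
      then show "c\<^sup>2 / (c\<^sup>2 + 1) < 1" by (simp add: divide_less_eq)
    qed
    finally show "c\<^sup>2 * (e / (c\<^sup>2 + 1)) < e" by simp
  qed fact
  finally show "\<exists>f\<in>B. (\<integral>\<^sup>+ \<phi>. ennreal ((hat f \<phi> - c * g \<phi>)\<^sup>2) \<partial>\<nu>) < ennreal e"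
    using B_scale[OF f(1)] by (intro bexI) auto
qed

lemma L2_approximable_indicator:
  assumes "E \<in> sets \<nu>" "emeasure \<nu> E < \<infinity>" shows "L2_approximable (indicator E)"
  unfolding L2_approximable_def
proof (intro allI impI)
  fix e :: real assume "e > 0"
  obtain K U where KU: "compactin T K" "openin T U" "K \<subseteq> E" "E \<subseteq> U" "emeasure \<nu> (U - K) < ennreal e"
    using exists_compact_open_between[OF assms \<open>e > 0\<close>] by blast
  have "K \<subseteq> U" using KU(3,4) by blast
  then obtain h where h: "h \<in> B" "\<And>\<phi>. \<phi> \<in> \<Delta> \<Longrightarrow> 0 \<le> hat h \<phi> \<and> hat h \<phi> \<le> 1"
    "\<And>\<phi>. \<phi> \<in> K \<Longrightarrow> hat h \<phi> = 1" "\<And>\<phi>. \<phi> \<in> \<Delta> \<Longrightarrow> \<phi> \<notin> U \<Longrightarrow> hat h \<phi> = 0"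
    using exists_urysohn[OF KU(1,2)] by blast
  have "(\<integral>\<^sup>+ \<phi>. ennreal ((hat h \<phi> - indicator E \<phi>)\<^sup>2) \<partial>\<nu>) \<le> (\<integral>\<^sup>+ \<phi>. indicator (U - K) \<phi> \<partial>\<nu>)"
  proof (intro nn_integral_mono)
    fix \<phi> assume "\<phi> \<in> space \<nu>"
    then have "\<phi> \<in> \<Delta>" by (simp add: space_nu)
    then have "(hat h \<phi> - indicator E \<phi>)\<^sup>2 \<le> indicator (U - K) \<phi>"
      using h(2-4)[of \<phi>] KU(3,4) by (auto simp: indicator_def abs_square_le_1)
    then show "ennreal ((hat h \<phi> - indicator E \<phi>)\<^sup>2) \<le> indicator (U - K) \<phi>"
      by (metis ennreal_leI ennreal_indicator)
  qed
  also have "\<dots> = emeasure \<nu> (U - K)"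
    using KU(1,2) openin_sets compactin_sets by (intro nn_integral_indicator) auto
  also have "\<dots> < ennreal e" by (fact KU(5))
  finally show "\<exists>f\<in>B. (\<integral>\<^sup>+ \<phi>. ennreal ((hat f \<phi> - indicator E \<phi>)\<^sup>2) \<partial>\<nu>) < ennreal e"
    using h(1) by (intro bexI)
qed

lemma L2_approximable_zero: "L2_approximable (\<lambda>\<phi>. 0)"
  unfolding L2_approximable_def
proof (intro allI impI bexI[OF _ B_zero])
  fix e :: real assume "e > 0"
  have "(\<integral>\<^sup>+ \<phi>. ennreal ((hat (\<lambda>x. 0) \<phi> - 0)\<^sup>2) \<partial>\<nu>) = (\<integral>\<^sup>+ \<phi>. 0 \<partial>\<nu>)"
    by (intro nn_integral_cong) (simp add: space_nu hat_zero)
  then show "(\<integral>\<^sup>+ \<phi>. ennreal ((hat (\<lambda>x. 0) \<phi> - 0)\<^sup>2) \<partial>\<nu>) < ennreal e" using \<open>e > 0\<close> by simp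
qed

lemma L2_approximable_mono_limit:
  assumes [measurable]: "\<And>i. U i \<in> borel_measurable \<nu>" "u \<in> borel_measurable \<nu>"
    and nonneg: "\<And>i x. 0 \<le> U i x" and "incseq U" and lim: "\<And>x. x \<in> space \<nu> \<Longrightarrow> (\<lambda>i. U i x) \<longlonglongrightarrow> u x"
    and fin: "(\<integral>\<^sup>+ x. ennreal ((u x)\<^sup>2) \<partial>\<nu>) < \<infinity>"
    and approx: "\<And>i. (\<integral>\<^sup>+ x. ennreal ((U i x)\<^sup>2) \<partial>\<nu>) < \<infinity> \<Longrightarrow> L2_approximable (U i)"
  shows "L2_approximable u"
  unfolding L2_approximable_def
proof (intro allI impI)
  fix e :: real assume "e > 0"
  have le: "U i x \<le> u x" if "x \<in> space \<nu>" for i x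
    using \<open>incseq U\<close> by (intro LIMSEQ_le_const[OF lim[OF that]]) (auto simp: incseq_def le_fun_def)
  have "(\<lambda>i. \<integral>\<^sup>+ x. ennreal ((U i x - u x)\<^sup>2) \<partial>\<nu>) \<longlonglongrightarrow> (\<integral>\<^sup>+ x. 0 \<partial>\<nu>)"
  proof (rule nn_integral_dominated_convergence[where w="\<lambda>x. ennreal ((u x)\<^sup>2)"])
    show "AE x in \<nu>. ennreal ((U i x - u x)\<^sup>2) \<le> ennreal ((u x)\<^sup>2)" for i
      using le nonneg by (intro AE_I2 ennreal_leI) (simp add: power2_commute power_mono)
    show "AE x in \<nu>. (\<lambda>i. ennreal ((U i x - u x)\<^sup>2)) \<longlonglongrightarrow> 0"
      using lim by (intro AE_I2) (auto intro!: tendsto_ennrealI[where x=0, simplified] tendsto_eq_intros)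
  qed (use fin in simp_all)
  then have "(\<lambda>i. \<integral>\<^sup>+ x. ennreal ((U i x - u x)\<^sup>2) \<partial>\<nu>) \<longlonglongrightarrow> 0" by simp
  moreover have "(0::ennreal) < ennreal (e / 4)" using \<open>e > 0\<close> by simp
  ultimately have "eventually (\<lambda>i. (\<integral>\<^sup>+ x. ennreal ((U i x - u x)\<^sup>2) \<partial>\<nu>) < ennreal (e / 4)) sequentially"
    by (rule order_tendstoD(2))
  then obtain i where i: "(\<integral>\<^sup>+ x. ennreal ((U i x - u x)\<^sup>2) \<partial>\<nu>) < ennreal (e / 4)"
    by (auto simp: eventually_sequentially)
  have "(\<integral>\<^sup>+ x. ennreal ((U i x)\<^sup>2) \<partial>\<nu>) \<le> (\<integral>\<^sup>+ x. ennreal ((u x)\<^sup>2) \<partial>\<nu>)"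
    using le nonneg by (intro nn_integral_mono ennreal_leI power_mono) auto
  then have "L2_approximable (U i)" using approx fin by (meson le_less_trans)
  moreover have "e / 4 > 0" using \<open>e > 0\<close> by simp
  ultimately obtain f where f: "f \<in> B" "(\<integral>\<^sup>+ x. ennreal ((hat f x - U i x)\<^sup>2) \<partial>\<nu>) < ennreal (e / 4)"
    unfolding L2_approximable_def by blast
  then have "(\<integral>\<^sup>+ x. ennreal (((hat f x - U i x) + (U i x - u x))\<^sup>2) \<partial>\<nu>) < ennreal e"
    using i by (intro nn_integral_square_add_less) auto
  then show "\<exists>f\<in>B. (\<integral>\<^sup>+ x. ennreal ((hat f x - u x)\<^sup>2) \<partial>\<nu>) < ennreal e" using f(1) by auto
qed

lemma L2_approximable_nonneg:
  assumes "u \<in> borel_measurable \<nu>" "\<And>x. 0 \<le> u x"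
  shows "(\<integral>\<^sup>+ x. ennreal ((u x)\<^sup>2) \<partial>\<nu>) < \<infinity> \<longrightarrow> L2_approximable u"
  using assms
proof (induction u rule: borel_measurable_induct_real)
  case (set E)
  have "(\<integral>\<^sup>+ x. ennreal ((indicator E x)\<^sup>2) \<partial>\<nu>) = (\<integral>\<^sup>+ x. indicator E x \<partial>\<nu>)"
    by (intro nn_integral_cong) (simp add: indicator_def)
  also have "\<dots> = emeasure \<nu> E" using set by simp
  finally show ?case using L2_approximable_indicator[OF set] by simp
next
  case (mult u c)
  show ?case
  proof (cases "c = 0")
    case True
    then show ?thesis using L2_approximable_zero by simp
  next
    case False
    note [measurable] = mult(2)
    have "(\<integral>\<^sup>+ x. ennreal ((c * u x)\<^sup>2) \<partial>\<nu>) = ennreal (c\<^sup>2) * (\<integral>\<^sup>+ x. ennreal ((u x)\<^sup>2) \<partial>\<nu>)"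
      by (simp add: power_mult_distrib ennreal_mult nn_integral_cmult flip: nn_integral_cmult)
    then have "(\<integral>\<^sup>+ x. ennreal ((c * u x)\<^sup>2) \<partial>\<nu>) < \<infinity> \<Longrightarrow> (\<integral>\<^sup>+ x. ennreal ((u x)\<^sup>2) \<partial>\<nu>) < \<infinity>"
      using False by (auto simp: ennreal_mult_less_top)
    then show ?thesis using mult(4) L2_approximable_scale[OF mult(2)] by blast
  qed
next
  case (add u v)
  have bound: "(\<integral>\<^sup>+ x. ennreal ((w x)\<^sup>2) \<partial>\<nu>) \<le> (\<integral>\<^sup>+ x. ennreal ((v x + u x)\<^sup>2) \<partial>\<nu>)"
    if "w = u \<or> w = v" for w
    using add(2,4) that by (intro nn_integral_mono ennreal_leI power_mono) (auto simp: add_increasing add_increasing2)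
  show ?case
  proof
    assume "(\<integral>\<^sup>+ x. ennreal ((v x + u x)\<^sup>2) \<partial>\<nu>) < \<infinity>"
    then have "L2_approximable u" "L2_approximable v"
      using add(6,7) le_less_trans[OF bound] by blast+
    then show "L2_approximable (\<lambda>x. v x + u x)" using L2_approximable_add[OF add(3) add(1)] by blast
  qed
next
  case (seq U)
  show ?case
    using L2_approximable_mono_limit[OF seq(1) assms(1) seq(2,3,4)] seq(5) by blast
qed

lemma L2_approximable_square_integrable:
  assumes [measurable]: "g \<in> borel_measurable \<nu>" and "integrable \<nu> (\<lambda>\<phi>. (g \<phi>)\<^sup>2)"
  shows "L2_approximable g"
proof -
  have fin: "(\<integral>\<^sup>+ \<phi>. ennreal ((g \<phi>)\<^sup>2) \<partial>\<nu>) < \<infinity>"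
    using integrableD(2)[OF assms(2)] by (simp add: less_top)
  have part: "L2_approximable (\<lambda>\<phi>. max (s * g \<phi>) 0)" if "s = 1 \<or> s = -1" for s :: real
  proof -
    have "(\<integral>\<^sup>+ \<phi>. ennreal ((max (s * g \<phi>) 0)\<^sup>2) \<partial>\<nu>) \<le> (\<integral>\<^sup>+ \<phi>. ennreal ((g \<phi>)\<^sup>2) \<partial>\<nu>)"
      using that by (intro nn_integral_mono ennreal_leI) (auto simp: max_def)
    then show ?thesis using L2_approximable_nonneg[of "\<lambda>\<phi>. max (s * g \<phi>) 0"] fin by (auto intro: le_less_trans)
  qed
  have "L2_approximable (\<lambda>\<phi>. max (g \<phi>) 0 + (-1) * max (- g \<phi>) 0)"
    using part[of 1] part[of "-1"]
    by (intro L2_approximable_add L2_approximable_scale; simp; measurable)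
  moreover have "(\<lambda>\<phi>. max (g \<phi>) 0 + (-1) * max (- g \<phi>) 0) = g" by (auto simp: fun_eq_iff max_def)
  ultimately show ?thesis by simp
qed

end

theorem mainTheorem10:
  fixes B :: "('x \<Rightarrow> real) set"
    and mu :: "'x set \<Rightarrow> ennreal"
    and \<nu> :: "(('x \<Rightarrow> complex) \<Rightarrow> complex) measure"
  assumes "admissible_space B"
    and "in_D B mu"
    and "is_hat_measure B mu \<nu>"
  shows "(\<forall>f\<in>B. integrable \<nu> (\<lambda>\<phi>. (Re (\<phi> (cfun f)))\<^sup>2)) \<and>
         (\<forall>g \<in> borel_measurable \<nu>. integrable \<nu> (\<lambda>\<phi>. (g \<phi>)\<^sup>2) \<longrightarrow>
            (\<forall>e>0. \<exists>f\<in>B. (\<integral>\<^sup>+ \<phi>. ennreal ((Re (\<phi> (cfun f)) - g \<phi>)\<^sup>2) \<partial>\<nu>) < ennreal e))"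
proof -
  interpret hat_measure B mu \<nu>
    using assms by (simp add: hat_measure_def hat_measure_axioms_def admissible_def)
  show ?thesis
    using integrable_hat_square L2_approximable_square_integrable
    unfolding L2_approximable_def hat_def by blast
qed

end
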